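(* Let $K$ be a compact subset of $I\setminus\{(c,\gamma): c_1=-1\text{ or }\gamma=\gamma^+(c)\}$. Then for any $\epsilon>0$ there exist positive constants $\delta$ and $C$, depending only on $\epsilon$ and $K$, such that for all $(c,\gamma)\in K$, $$|U^{c,\gamma}_\theta(x)-U^{c,\gamma}_\theta(-1)|\le C(1+x)^{\min\{\sqrt{1+c_1},1\}-\epsilon},\quad -1<x<-1+\delta.$$
   Context: For $c=(c_1,c_2,c_3)$ let $P_c(x):=c_1(1-x)+c_2(1+x)+c_3(1-x^2)$ and consider $(1-x^2)U'+2xU+\frac12U^2=P_c(x)$ on $(-1,1)$. For $c_1,c_2\ge-1$ let $\bar c_3(c_1,c_2):=-\frac12(\sqrt{1+c_1}+\sqrt{1+c_2})(\sqrt{1+c_1}+\sqrt{1+c_2}+2)$, $J:=\{c:c_1\ge-1,c_2\ge-1,c_3\ge\bar c_3\}$. For $c\in J$ there are solutions $U^\pm_\theta(c)$ on $(-1,1)$ with $U^-_\theta(c)\le U\le U^+_\theta(c)$ for every solution $U$; $\gamma^\pm(c):=U^\pm_\theta(c)(0)$; $I:=\{(c,\gamma):c\in J,\gamma^-(c)\le\gamma\le\gamma^+(c)\}$; for $(c,\gamma)\in I$, $U^{c,\gamma}_\theta$ is the unique solution on $(-1,1)$ with $U^{c,\gamma}_\theta(0)=\gamma$, which extends continuously to $[-1,1]$; $U^{c,\gamma}_\theta(-1)$ is its limit at $-1$. *)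

theory Defs
  imports "HOL-Analysis.Analysis"
begin

type_synonym param = "real \<times> real \<times> real"

definition cc1 :: "param \<Rightarrow> real" where "cc1 c = fst c"
definition cc2 :: "param \<Rightarrow> real" where "cc2 c = fst (snd c)"
definition cc3 :: "param \<Rightarrow> real" where "cc3 c = snd (snd c)"

definition Pc :: "param \<Rightarrow> real \<Rightarrow> real" where
  "Pc c x = cc1 c * (1 - x) + cc2 c * (1 + x) + cc3 c * (1 - x\<^sup>2)"

definition is_sol :: "param \<Rightarrow> (real \<Rightarrow> real) \<Rightarrow> bool" where
  "is_sol c U \<longleftrightarrow> (\<forall>x. -1 < x \<and> x < 1 \<longrightarrow>
      U differentiable (at x) \<and>
      (1 - x\<^sup>2) * deriv U x + 2 * x * U x + (1/2) * (U x)\<^sup>2 = Pc c x)"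

definition c3bar :: "real \<Rightarrow> real \<Rightarrow> real" where
  "c3bar a b = - (1/2) * (sqrt (1 + a) + sqrt (1 + b)) * (sqrt (1 + a) + sqrt (1 + b) + 2)"

definition Jset :: "param set" where
  "Jset = {c. cc1 c \<ge> -1 \<and> cc2 c \<ge> -1 \<and> cc3 c \<ge> c3bar (cc1 c) (cc2 c)}"

definition gamma_plus :: "param \<Rightarrow> real" where
  "gamma_plus c = (THE g. \<exists>U. is_sol c U \<and>
      (\<forall>V. is_sol c V \<longrightarrow> (\<forall>x. -1 < x \<and> x < 1 \<longrightarrow> V x \<le> U x)) \<and> U 0 = g)"

definition gamma_minus :: "param \<Rightarrow> real" where
  "gamma_minus c = (THE g. \<exists>U. is_sol c U \<and>
      (\<forall>V. is_sol c V \<longrightarrow> (\<forall>x. -1 < x \<and> x < 1 \<longrightarrow> U x \<le> V x)) \<and> U 0 = g)"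

definition Iset :: "(param \<times> real) set" where
  "Iset = {(c, g). c \<in> Jset \<and> gamma_minus c \<le> g \<and> g \<le> gamma_plus c}"

end

theory Submission
  imports Defs
begin

text \<open>At \<open>x = -1\<close> the equation degenerates to \<open>U\<^sup>2/2 - 2U = 2c\<^sub>1\<close>, with roots \<open>2 \<plusminus> 2a\<close>,
  \<open>a = \<surd>(1 + c\<^sub>1)\<close>. Writing \<open>U = 2 - 2a + v\<close>, near \<open>-1\<close> the equation reads
  \<open>2(1 + x) v' \<approx> v (2a - v/2)\<close>, so a solution either approaches \<open>2 - 2a\<close> like \<open>(1 + x)\<^sup>a\<close> or stays
  near \<open>2 + 2a\<close>. A solution staying above \<open>2 + a\<close> lies above every other solution (two such
  solutions separate like \<open>(1 + x)\<^bsup>-a/2\<^esup>\<close>, contradicting an a priori bound), so it is the maximal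
  one. Hence a solution with \<open>U(0) \<noteq> \<gamma>\<^sup>+\<close> comes \<open>\<epsilon>\<close>-close to \<open>2 - 2a\<close> at some scale \<open>s\<^sub>0\<close>, and
  from there the barriers \<open>2 - 2a \<plusminus> A(1 + x)\<^bsup>\<mu>\<^esup>\<close>, \<open>\<mu> = min a 1 - \<epsilon>\<close>, trap it down to \<open>x = -1\<close>;
  the cap at \<open>1\<close> absorbs the terms of order \<open>1 + x\<close>. Closeness at the fixed scale \<open>s\<^sub>0\<close> persists
  for nearby \<open>(c, \<gamma>)\<close> by Gronwall's inequality, and compactness of \<open>K\<close> makes the constants uniform.\<close>

section \<open>Comparison principles\<close>

lemma nonneg_propagates_left:
  fixes f f' :: "real \<Rightarrow> real"
  assumes ab: "a \<le> b"
    and der: "\<And>t. a \<le> t \<Longrightarrow> t \<le> b \<Longrightarrow> (f has_real_derivative f' t) (at t)"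
    and fb: "f b \<ge> 0"
    and crossing: "\<And>t. a \<le> t \<Longrightarrow> t \<le> b \<Longrightarrow> f t = 0 \<Longrightarrow> f' t < 0"
  shows "f a \<ge> 0"
proof (rule ccontr)
  assume neg: "\<not> f a \<ge> 0"
  have cont: "continuous_on {a..b} f"
    using der by (meson DERIV_isCont atLeastAtMost_iff continuous_at_imp_continuous_on)
  define Z where "Z = {a..b} \<inter> f -` {0}"
  have "closed Z" unfolding Z_def by (rule continuous_closed_preimage[OF cont]) auto
  moreover have "Z \<noteq> {}"
    using IVT'[of f a 0 b] neg fb ab cont unfolding Z_def by auto
  moreover have bdd: "bdd_below Z" unfolding Z_def by (rule bdd_belowI[of _ a]) auto
  ultimately have "Inf Z \<in> Z" by (rule closed_contains_Inf[rotated -1])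
  then have z: "a \<le> Inf Z" "Inf Z \<le> b" "f (Inf Z) = 0" unfolding Z_def by auto
  have "a < Inf Z" using z neg by (cases "a = Inf Z") auto
  obtain d where d: "d > 0" "\<And>h. h > 0 \<Longrightarrow> h < d \<Longrightarrow> f (Inf Z) < f (Inf Z - h)"
    using DERIV_neg_dec_left[OF der[OF z(1,2)] crossing[OF z]] by blast
  define h where "h = min (d/2) ((Inf Z - a)/2)"
  have h: "h > 0" "h < d" "Inf Z - h > a" using d \<open>a < Inf Z\<close> unfolding h_def by (auto simp: min_def field_simps)
  have "continuous_on {a..Inf Z - h} f" using cont by (rule continuous_on_subset) (use z h in auto)
  then obtain t where t: "a \<le> t" "t \<le> Inf Z - h" "f t = 0"
    using IVT'[of f a 0 "Inf Z - h"] neg h d(2)[of h] z by auto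
  then have "t \<in> Z" using z h unfolding Z_def by auto
  then have "Inf Z \<le> t" using bdd by (rule cInf_lower)
  then show False using t h by auto
qed

lemma nonneg_propagates_right:
  fixes f f' :: "real \<Rightarrow> real"
  assumes ab: "a \<le> b"
    and der: "\<And>t. a \<le> t \<Longrightarrow> t \<le> b \<Longrightarrow> (f has_real_derivative f' t) (at t)"
    and fa: "f a \<ge> 0"
    and crossing: "\<And>t. a \<le> t \<Longrightarrow> t \<le> b \<Longrightarrow> f t = 0 \<Longrightarrow> f' t > 0"
  shows "f b \<ge> 0"
proof -
  have "f (- (- b)) \<ge> 0"
  proof (rule nonneg_propagates_left[of "-b" "-a" "\<lambda>t. f (- t)" "\<lambda>t. - f' (- t)"])
    fix t assume "-b \<le> t" "t \<le> -a"
    then show "((\<lambda>t. f (- t)) has_real_derivative - f' (- t)) (at t)"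
      using der[of "- t"] by (simp add: DERIV_mirror[symmetric])
    show "f (- t) = 0 \<Longrightarrow> - f' (- t) < 0" using crossing[of "- t"] \<open>-b \<le> t\<close> \<open>t \<le> -a\<close> by auto
  qed (use ab fa in auto)
  then show ?thesis by simp
qed

lemma gronwall_upper_forward:
  fixes D D' :: "real \<Rightarrow> real"
  assumes "x0 \<le> t"
    and der: "\<And>u. x0 \<le> u \<Longrightarrow> u \<le> t \<Longrightarrow> (D has_real_derivative D' u) (at u)"
    and bnd: "\<And>u. x0 \<le> u \<Longrightarrow> u \<le> t \<Longrightarrow> D' u \<le> L * \<bar>D u\<bar> + Q"
    and "L \<ge> 0" "Q \<ge> 0" "K > Q" "D x0 \<le> K - Q"
  shows "D t \<le> K * exp ((L + 1) * (t - x0)) - Q"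
proof -
  define E where "E u = K * exp ((L + 1) * (u - x0))" for u
  have "E t - Q - D t \<ge> 0"
  proof (rule nonneg_propagates_right[of x0 t _ "\<lambda>u. (L + 1) * E u - D' u"])
    fix u assume u: "x0 \<le> u" "u \<le> t"
    show "((\<lambda>u. E u - Q - D u) has_real_derivative (L + 1) * E u - D' u) (at u)"
      unfolding E_def using der[OF u] by (auto intro!: derivative_eq_intros)
    assume zero: "E u - Q - D u = 0"
    have "E u \<ge> K"
      using u assms(4-6) unfolding E_def by (simp add: mult_le_cancel_left1)
    then have "D' u \<le> L * (E u - Q) + Q" using bnd[OF u] zero assms(6) by simp
    moreover have "L * (E u - Q) = L * E u - L * Q" by (simp add: algebra_simps)
    moreover have "L * Q \<ge> 0" using assms(4,5) by simp
    ultimately show "(L + 1) * E u - D' u > 0"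
      using \<open>E u \<ge> K\<close> assms(6) by (simp add: algebra_simps)
  qed (use assms in \<open>auto simp: E_def\<close>)
  then show ?thesis unfolding E_def by simp
qed

lemma gronwall_forward:
  fixes D D' :: "real \<Rightarrow> real"
  assumes "x0 \<le> t"
    and der: "\<And>u. x0 \<le> u \<Longrightarrow> u \<le> t \<Longrightarrow> (D has_real_derivative D' u) (at u)"
    and bnd: "\<And>u. x0 \<le> u \<Longrightarrow> u \<le> t \<Longrightarrow> \<bar>D' u\<bar> \<le> L * \<bar>D u\<bar> + Q"
    and "L \<ge> 0" "Q \<ge> 0"
  shows "\<bar>D t\<bar> \<le> (\<bar>D x0\<bar> + Q) * exp ((L + 1) * (t - x0))"
proof (rule field_le_epsilon)
  fix e :: real assume "e > 0"
  define E where "E = exp ((L + 1) * (t - x0))"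
  define K where "K = \<bar>D x0\<bar> + e / E + Q"
  have "e / E > 0" using \<open>e > 0\<close> by (simp add: E_def)
  then have K: "K > Q" unfolding K_def using abs_ge_zero[of "D x0"] by linarith
  have bnd': "D' u \<le> L * \<bar>D u\<bar> + Q" "- D' u \<le> L * \<bar>D u\<bar> + Q" if "x0 \<le> u" "u \<le> t" for u
    using bnd[OF that] by (simp_all add: abs_le_iff)
  have "D t \<le> K * E - Q"
    unfolding E_def
    by (rule gronwall_upper_forward[OF assms(1) der _ assms(4,5) K])
       (use bnd' \<open>e / E > 0\<close> in \<open>auto simp: K_def\<close>)
  moreover have "- D t \<le> K * E - Q"
    unfolding E_def
    by (rule gronwall_upper_forward[OF assms(1) _ _ assms(4,5) K, of "\<lambda>u. - D u" "\<lambda>u. - D' u"])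
       (use bnd' \<open>e / E > 0\<close> in \<open>auto simp: K_def intro!: derivative_eq_intros der\<close>)
  moreover have "K * E = (\<bar>D x0\<bar> + Q) * E + e" unfolding K_def E_def by (simp add: field_simps)
  ultimately show "\<bar>D t\<bar> \<le> (\<bar>D x0\<bar> + Q) * exp ((L + 1) * (t - x0)) + e"
    using assms(5) unfolding E_def by linarith
qed

lemma gronwall:
  fixes D D' :: "real \<Rightarrow> real"
  assumes "lo \<le> x0" "x0 \<le> hi" "lo \<le> t" "t \<le> hi"
    and der: "\<And>u. lo \<le> u \<Longrightarrow> u \<le> hi \<Longrightarrow> (D has_real_derivative D' u) (at u)"
    and bnd: "\<And>u. lo \<le> u \<Longrightarrow> u \<le> hi \<Longrightarrow> \<bar>D' u\<bar> \<le> L * \<bar>D u\<bar> + Q"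
    and "L \<ge> 0" "Q \<ge> 0"
  shows "\<bar>D t\<bar> \<le> (\<bar>D x0\<bar> + Q) * exp ((L + 1) * \<bar>t - x0\<bar>)"
proof (cases "x0 \<le> t")
  case True
  then show ?thesis using gronwall_forward[OF True der bnd] assms by auto
next
  case False
  have "\<bar>D (- (- t))\<bar> \<le> (\<bar>D (- (- x0))\<bar> + Q) * exp ((L + 1) * (- t - - x0))"
  proof (rule gronwall_forward[of _ _ "\<lambda>u. D (- u)" "\<lambda>u. - D' (- u)"])
    fix u assume "- x0 \<le> u" "u \<le> - t"
    then show "((\<lambda>u. D (- u)) has_real_derivative - D' (- u)) (at u)"
      using der[of "- u"] assms by (simp add: DERIV_mirror[symmetric])
    show "\<bar>- D' (- u)\<bar> \<le> L * \<bar>D (- u)\<bar> + Q" using bnd[of "- u"] \<open>- x0 \<le> u\<close> \<open>u \<le> - t\<close> assms by auto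
  qed (use False assms in auto)
  then show ?thesis using False by simp
qed

section \<open>A priori bound\<close>

definition riccati_rhs :: "param \<Rightarrow> real \<Rightarrow> real \<Rightarrow> real" where
  "riccati_rhs c x u = Pc c x - 2 * x * u - u\<^sup>2 / 2"

lemma is_sol_iff_has_derivative:
  "is_sol c U \<longleftrightarrow>
     (\<forall>x. -1 < x \<and> x < 1 \<longrightarrow> (U has_real_derivative riccati_rhs c x (U x) / (1 - x\<^sup>2)) (at x))"
proof -
  have "(U differentiable (at x) \<and> (1 - x\<^sup>2) * deriv U x + 2 * x * U x + (1/2) * (U x)\<^sup>2 = Pc c x)
      \<longleftrightarrow> (U has_real_derivative riccati_rhs c x (U x) / (1 - x\<^sup>2)) (at x)"
    if "-1 < x" "x < 1" for x
  proof -
    have "1 - x\<^sup>2 > 0" using that by (simp add: abs_square_less_1)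
    then have "(1 - x\<^sup>2) * deriv U x + 2 * x * U x + (1/2) * (U x)\<^sup>2 = Pc c x
        \<longleftrightarrow> deriv U x = riccati_rhs c x (U x) / (1 - x\<^sup>2)"
      by (auto simp: riccati_rhs_def field_simps)
    then show ?thesis
      by (metis DERIV_deriv_iff_real_differentiable DERIV_imp_deriv real_differentiable_def)
  qed
  then show ?thesis unfolding is_sol_def by blast
qed

lemma sol_has_derivative:
  "is_sol c U \<Longrightarrow> -1 < x \<Longrightarrow> x < 1 \<Longrightarrow>
     (U has_real_derivative riccati_rhs c x (U x) / (1 - x\<^sup>2)) (at x)"
  by (simp add: is_sol_iff_has_derivative)

lemma sol_continuous_on:
  assumes "is_sol c U" "-1 < lo" "hi < 1"
  shows "continuous_on {lo..hi} U"
proof (intro continuous_at_imp_continuous_on ballI)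
  fix x assume "x \<in> {lo..hi}"
  then have "-1 < x" "x < 1" using assms(2,3) by auto
  then show "isCont U x" by (rule DERIV_isCont[OF sol_has_derivative[OF assms(1)]])
qed

lemma one_minus_sq_le_double: "1 - t\<^sup>2 \<le> 2 * (1 + t)" for t :: real
proof -
  have "2 * (1 + t) - (1 - t\<^sup>2) = (1 + t)\<^sup>2" by (simp add: power2_eq_square algebra_simps)
  then show ?thesis using zero_le_power2[of "1 + t"] by linarith
qed

definition coeff_bound :: "param \<Rightarrow> real" where
  "coeff_bound c = 2 * \<bar>cc1 c\<bar> + 2 * \<bar>cc2 c\<bar> + \<bar>cc3 c\<bar>"

definition apriori_radius :: "param \<Rightarrow> real" where
  "apriori_radius c = 9 + coeff_bound c"

lemma apriori_radius_ge_9: "apriori_radius c \<ge> 9"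
  by (simp add: apriori_radius_def coeff_bound_def)

lemma abs_Pc_le_coeff_bound:
  assumes "-1 < x" "x < 1"
  shows "\<bar>Pc c x\<bar> \<le> coeff_bound c"
proof -
  have "\<bar>cc1 c\<bar> * \<bar>1 - x\<bar> \<le> \<bar>cc1 c\<bar> * 2" "\<bar>cc2 c\<bar> * \<bar>1 + x\<bar> \<le> \<bar>cc2 c\<bar> * 2"
    using assms by (intro mult_left_mono; simp)+
  then have "\<bar>cc1 c * (1 - x)\<bar> \<le> 2 * \<bar>cc1 c\<bar>" "\<bar>cc2 c * (1 + x)\<bar> \<le> 2 * \<bar>cc2 c\<bar>"
    by (simp_all add: abs_mult)
  moreover have "\<bar>cc3 c * (1 - x\<^sup>2)\<bar> \<le> \<bar>cc3 c\<bar>"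
    using assms by (auto simp: abs_mult abs_square_less_1 less_imp_le intro!: mult_left_le)
  ultimately show ?thesis unfolding Pc_def coeff_bound_def by linarith
qed

lemma riccati_rhs_le_neg_quarter_sq:
  assumes "-1 < x" "x < 1" "\<bar>u\<bar> \<ge> apriori_radius c"
  shows "riccati_rhs c x u \<le> - u\<^sup>2 / 4"
proof -
  have P: "\<bar>Pc c x\<bar> \<le> coeff_bound c" using abs_Pc_le_coeff_bound assms by blast
  have P0: "coeff_bound c \<ge> 0" by (simp add: coeff_bound_def)
  have "\<bar>2 * x * u\<bar> \<le> 2 * \<bar>u\<bar>" using assms by (simp add: abs_mult mult_left_le_one_le)
  moreover have "\<bar>u\<bar> * (\<bar>u\<bar> - 8) \<ge> (9 + coeff_bound c) * (1 + coeff_bound c)"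
    using assms P0 unfolding apriori_radius_def by (intro mult_mono) auto
  moreover have "(9 + coeff_bound c) * (1 + coeff_bound c) \<ge> 4 * coeff_bound c"
    using P0 by (simp add: algebra_simps)
  moreover have "u\<^sup>2 = \<bar>u\<bar> * \<bar>u\<bar>" by (simp add: power2_eq_square abs_mult[symmetric])
  ultimately have "u\<^sup>2 / 4 \<ge> \<bar>2 * x * u\<bar> + coeff_bound c" by (simp add: algebra_simps)
  moreover have "- (2 * x * u) \<le> \<bar>2 * x * u\<bar>" "Pc c x \<le> coeff_bound c" using P by auto
  ultimately show ?thesis unfolding riccati_rhs_def by linarith
qed

lemma sol_ge_apriori_radius_leftwards:
  assumes sol: "is_sol c U" and "-1 < t" "t \<le> x0" "x0 < 1" and big: "U x0 \<ge> apriori_radius c"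
  shows "U t \<ge> apriori_radius c"
proof -
  have "U t - apriori_radius c \<ge> 0"
  proof (rule nonneg_propagates_left[of t x0 "\<lambda>t. U t - apriori_radius c"
        "\<lambda>t. riccati_rhs c t (U t) / (1 - t\<^sup>2)"])
    fix u assume u: "t \<le> u" "u \<le> x0"
    with assms have u1: "-1 < u" "u < 1" by auto
    show "((\<lambda>t. U t - apriori_radius c) has_real_derivative riccati_rhs c u (U u) / (1 - u\<^sup>2)) (at u)"
      using sol_has_derivative[OF sol u1] by (auto intro!: derivative_eq_intros)
    assume "U u - apriori_radius c = 0"
    then have "riccati_rhs c u (U u) \<le> - (U u)\<^sup>2 / 4" "(U u)\<^sup>2 > 0"
      using riccati_rhs_le_neg_quarter_sq[OF u1, where u = "U u"] apriori_radius_ge_9[of c] by auto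
    then have "riccati_rhs c u (U u) < 0" by linarith
    moreover have "1 - u\<^sup>2 > 0" using u1 by (simp add: abs_square_less_1)
    ultimately show "riccati_rhs c u (U u) / (1 - u\<^sup>2) < 0" by (simp add: divide_neg_pos)
  qed (use assms in auto)
  then show ?thesis by simp
qed

text \<open>Above the radius \<open>(1/U)' \<ge> 1/(4(1-t\<^sup>2)) \<ge> 1/(8(1+t))\<close>, so \<open>1/U - ln (1 + t) / 8\<close>
  increases; moving far enough to the left would make \<open>1/U\<close> negative.\<close>

lemma sol_less_apriori_radius:
  assumes sol: "is_sol c U" and x0: "-1 < x0" "x0 < 1"
  shows "U x0 < apriori_radius c"
proof (rule ccontr)
  assume "\<not> U x0 < apriori_radius c"
  then have U0: "U x0 \<ge> apriori_radius c" by simp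
  have R9: "apriori_radius c \<ge> 9" by (rule apriori_radius_ge_9)
  have geR: "U t \<ge> apriori_radius c" if "-1 < t" "t \<le> x0" for t
    using sol_ge_apriori_radius_leftwards[OF sol that x0(2) U0] .
  define phi where "phi t = inverse (U t) - ln (1 + t) / 8" for t
  define x where "x = -1 + (1 + x0) * exp (- (8 / U x0) - 1)"
  have "8 / U x0 > 0" using U0 R9 by simp
  then have "- (8 / U x0) - 1 \<le> 0" by linarith
  then have "exp (- (8 / U x0) - 1) \<le> 1" by simp
  then have "(1 + x0) * exp (- (8 / U x0) - 1) \<le> 1 + x0"
    by (rule mult_left_le) (use x0 in auto)
  moreover have "(1 + x0) * exp (- (8 / U x0) - 1) > 0" using x0 by simp
  ultimately have x: "-1 < x" "x \<le> x0" unfolding x_def by linarith+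
  have "phi x \<le> phi x0"
  proof (rule DERIV_nonneg_imp_nondecreasing[OF x(2)])
    fix t assume t: "x \<le> t" "t \<le> x0"
    then have t1: "-1 < t" "t < 1" using x x0 by auto
    have Ut: "U t \<ge> apriori_radius c" using geR t1 t by auto
    then have Upos: "U t > 0" using R9 by simp
    have pos: "1 - t\<^sup>2 > 0" using t1 by (simp add: abs_square_less_1)
    have "((\<lambda>t. inverse (U t)) has_real_derivative
        - (riccati_rhs c t (U t) / (1 - t\<^sup>2) * inverse (U t ^ Suc (Suc 0)))) (at t)"
      using Upos
      by (intro DERIV_inverse_fun sol_has_derivative[OF sol t1]) simp
    moreover have "((\<lambda>t. ln (1 + t) / 8) has_real_derivative 1 / (1 + t) / 8) (at t)"
      using t1 by (auto intro!: derivative_eq_intros simp: field_simps)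
    ultimately have der: "(phi has_real_derivative
        (- riccati_rhs c t (U t) / (U t)\<^sup>2) / (1 - t\<^sup>2) - 1 / (1 + t) / 8) (at t)"
      unfolding phi_def by (auto dest: DERIV_diff simp: field_simps power2_eq_square)
    have "- riccati_rhs c t (U t) / (U t)\<^sup>2 \<ge> 1/4"
      using riccati_rhs_le_neg_quarter_sq[OF t1, where u = "U t"] Ut R9 Upos by (simp add: field_simps)
    then have "(- riccati_rhs c t (U t) / (U t)\<^sup>2) / (1 - t\<^sup>2) \<ge> (1/4) / (1 - t\<^sup>2)"
      using pos by (intro divide_right_mono) auto
    moreover have "(1/4) / (1 - t\<^sup>2) \<ge> 1 / (1 + t) / 8"
      using one_minus_sq_le_double[of t] pos t1 by (simp add: field_simps)
    ultimately show "\<exists>y. (phi has_real_derivative y) (at t) \<and> 0 \<le> y" using der by force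
  qed
  moreover have "ln (1 + x) = ln (1 + x0) - 8 / U x0 - 1"
    unfolding x_def using x0 by (simp add: ln_mult)
  ultimately have "inverse (U x) \<le> - 1 / 8" unfolding phi_def by (simp add: field_simps)
  moreover have "U x > 0" using geR[OF x] R9 by simp
  ultimately show False by (simp add: field_simps)
qed

definition swap_ends :: "param \<Rightarrow> param" where
  "swap_ends c = (cc2 c, cc1 c, cc3 c)"

lemma apriori_radius_swap_ends [simp]: "apriori_radius (swap_ends c) = apriori_radius c"
  by (simp add: apriori_radius_def coeff_bound_def swap_ends_def cc1_def cc2_def cc3_def)

lemma is_sol_reflect:
  assumes "is_sol c U"
  shows "is_sol (swap_ends c) (\<lambda>x. - U (- x))"
  unfolding is_sol_iff_has_derivative
proof (intro allI impI)
  fix x :: real assume "-1 < x \<and> x < 1"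
  then have "(U has_real_derivative riccati_rhs c (- x) (U (- x)) / (1 - x\<^sup>2)) (at (- x))"
    using sol_has_derivative[OF assms, of "- x"] by simp
  moreover have "riccati_rhs c (- x) (U (- x)) = riccati_rhs (swap_ends c) x (- U (- x))"
    by (simp add: riccati_rhs_def Pc_def swap_ends_def cc1_def cc2_def cc3_def algebra_simps)
  ultimately show "((\<lambda>x. - U (- x)) has_real_derivative
      riccati_rhs (swap_ends c) x (- U (- x)) / (1 - x\<^sup>2)) (at x)"
    by (auto simp: DERIV_mirror intro!: derivative_eq_intros)
qed

lemma sol_abs_less_apriori_radius:
  assumes sol: "is_sol c U" and "-1 < x" "x < 1"
  shows "\<bar>U x\<bar> < apriori_radius c"
  using sol_less_apriori_radius[OF sol assms(2,3)]
    sol_less_apriori_radius[OF is_sol_reflect[OF sol], of "- x"] assms(2,3)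
  by auto

section \<open>Continuous dependence and limits of solutions\<close>

lemma abs_cc_le_norm:
  fixes d :: param
  shows "\<bar>cc1 d\<bar> \<le> norm d" "\<bar>cc2 d\<bar> \<le> norm d" "\<bar>cc3 d\<bar> \<le> norm d"
proof -
  obtain a b e where d: "d = (a, b, e)" by (cases d) auto
  have "norm a \<le> norm d" "norm (b, e) \<le> norm d" unfolding d by (rule norm_fst_le, rule norm_snd_le)
  moreover have "norm b \<le> norm (b, e)" "norm e \<le> norm (b, e)" by (rule norm_fst_le, rule norm_snd_le)
  ultimately show "\<bar>cc1 d\<bar> \<le> norm d" "\<bar>cc2 d\<bar> \<le> norm d" "\<bar>cc3 d\<bar> \<le> norm d"
    by (auto simp: cc1_def cc2_def cc3_def d)
qed

lemma coeff_bound_le_norm: "coeff_bound d \<le> 5 * norm d"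
  using abs_cc_le_norm[of d] unfolding coeff_bound_def by linarith

lemma apriori_radius_le_norm: "apriori_radius c \<le> 9 + 5 * norm c"
  using coeff_bound_le_norm[of c] unfolding apriori_radius_def by linarith

lemma riccati_rhs_lipschitz:
  assumes t: "-1 < t" "t < 1" and u: "\<bar>u\<bar> \<le> R" "\<bar>u'\<bar> \<le> R"
  shows "\<bar>riccati_rhs c t u - riccati_rhs c' t u'\<bar> \<le> 5 * norm (c - c') + (2 + R) * \<bar>u - u'\<bar>"
proof -
  have "riccati_rhs c t u - riccati_rhs c' t u' = Pc (c - c') t - (u - u') * (2 * t + (u + u') / 2)"
    unfolding riccati_rhs_def Pc_def cc1_def cc2_def cc3_def
    by (simp add: field_simps power2_eq_square)
  moreover have "\<bar>Pc (c - c') t\<bar> \<le> 5 * norm (c - c')"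
    using abs_Pc_le_coeff_bound[OF t] coeff_bound_le_norm order_trans by blast
  moreover have "\<bar>(u - u') * (2 * t + (u + u') / 2)\<bar> \<le> \<bar>u - u'\<bar> * (2 + R)"
    unfolding abs_mult using t u by (intro mult_left_mono) (auto simp: abs_le_iff field_simps)
  ultimately show ?thesis by (simp add: algebra_simps)
qed

lemma one_minus_sq_ge:
  fixes \<sigma> t :: real
  assumes "0 < \<sigma>" "\<sigma> \<le> 1" "-1 + \<sigma> \<le> t" "t \<le> 1 - \<sigma>"
  shows "1 - t\<^sup>2 \<ge> \<sigma>"
proof (cases "t \<ge> 0")
  case True
  have "(1 + t) * (1 - t) \<ge> 1 * \<sigma>" using mult_mono[of 1 "1 + t" \<sigma> "1 - t"] assms True by auto
  then show ?thesis by (simp add: power2_eq_square algebra_simps)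
next
  case False
  have "(1 + t) * (1 - t) \<ge> \<sigma> * 1" using mult_mono[of \<sigma> "1 + t" 1 "1 - t"] assms False by auto
  then show ?thesis by (simp add: power2_eq_square algebra_simps)
qed

lemma sol_diff_gronwall:
  assumes solU: "is_sol c U" and solV: "is_sol c' V"
    and s: "0 < \<sigma>" "\<sigma> \<le> 1" and z: "-1 + \<sigma> \<le> z" "z \<le> 1 - \<sigma>" and x: "-1 + \<sigma> \<le> x" "x \<le> 1 - \<sigma>"
    and R: "apriori_radius c \<le> R" "apriori_radius c' \<le> R"
  shows "\<bar>U x - V x\<bar>
    \<le> (\<bar>U z - V z\<bar> + 5 * norm (c - c') / \<sigma>) * exp (((2 + R) / \<sigma> + 1) * \<bar>x - z\<bar>)"
proof (rule gronwall[OF z x])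
  fix t assume t: "-1 + \<sigma> \<le> t" "t \<le> 1 - \<sigma>"
  then have t1: "-1 < t" "t < 1" using s by auto
  show "((\<lambda>t. U t - V t) has_real_derivative
      riccati_rhs c t (U t) / (1 - t\<^sup>2) - riccati_rhs c' t (V t) / (1 - t\<^sup>2)) (at t)"
    using sol_has_derivative[OF solU t1] sol_has_derivative[OF solV t1] by (rule DERIV_diff)
  have "\<bar>U t\<bar> \<le> R" "\<bar>V t\<bar> \<le> R"
    using sol_abs_less_apriori_radius[OF solU t1] sol_abs_less_apriori_radius[OF solV t1] R by auto
  then have num: "\<bar>riccati_rhs c t (U t) - riccati_rhs c' t (V t)\<bar>
      \<le> 5 * norm (c - c') + (2 + R) * \<bar>U t - V t\<bar>"
    by (rule riccati_rhs_lipschitz[OF t1])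
  have pos: "1 - t\<^sup>2 \<ge> \<sigma>" by (rule one_minus_sq_ge) (use s t in auto)
  have "\<bar>riccati_rhs c t (U t) / (1 - t\<^sup>2) - riccati_rhs c' t (V t) / (1 - t\<^sup>2)\<bar>
      = \<bar>riccati_rhs c t (U t) - riccati_rhs c' t (V t)\<bar> / (1 - t\<^sup>2)"
    using pos s by (simp add: diff_divide_distrib[symmetric])
  also have "\<dots> \<le> (5 * norm (c - c') + (2 + R) * \<bar>U t - V t\<bar>) / \<sigma>"
    using num pos s by (intro frac_le) auto
  also have "\<dots> = (2 + R) / \<sigma> * \<bar>U t - V t\<bar> + 5 * norm (c - c') / \<sigma>"
    by (simp add: add_divide_distrib algebra_simps)
  finally show "\<bar>riccati_rhs c t (U t) / (1 - t\<^sup>2) - riccati_rhs c' t (V t) / (1 - t\<^sup>2)\<bar>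
      \<le> (2 + R) / \<sigma> * \<bar>U t - V t\<bar> + 5 * norm (c - c') / \<sigma>" .
qed (use s R apriori_radius_ge_9[of c] in auto)

lemma sol_diff_bound:
  assumes solU: "is_sol c U" and solV: "is_sol c' V"
    and s: "0 < \<sigma>" "\<sigma> \<le> 1" and x: "-1 + \<sigma> \<le> x" "x \<le> 1 - \<sigma>"
    and R: "apriori_radius c \<le> R" "apriori_radius c' \<le> R"
  shows "\<bar>U x - V x\<bar> \<le> (1 + 5 / \<sigma>) * exp ((2 + R) / \<sigma> + 1) * (\<bar>U 0 - V 0\<bar> + norm (c - c'))"
proof -
  have "\<bar>U x - V x\<bar> \<le> (\<bar>U 0 - V 0\<bar> + 5 * norm (c - c') / \<sigma>) * exp (((2 + R) / \<sigma> + 1) * \<bar>x - 0\<bar>)"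
    by (rule sol_diff_gronwall[OF solU solV s _ _ x R]) (use s in auto)
  also have "\<dots> \<le> ((1 + 5 / \<sigma>) * (\<bar>U 0 - V 0\<bar> + norm (c - c'))) * exp ((2 + R) / \<sigma> + 1)"
  proof (rule mult_mono)
    show "\<bar>U 0 - V 0\<bar> + 5 * norm (c - c') / \<sigma> \<le> (1 + 5 / \<sigma>) * (\<bar>U 0 - V 0\<bar> + norm (c - c'))"
      using s by (simp add: field_simps)
    have "((2 + R) / \<sigma> + 1) * \<bar>x\<bar> \<le> ((2 + R) / \<sigma> + 1) * 1"
      using s x R apriori_radius_ge_9[of c] by (intro mult_left_mono) auto
    then show "exp (((2 + R) / \<sigma> + 1) * \<bar>x - 0\<bar>) \<le> exp ((2 + R) / \<sigma> + 1)" by simp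
  qed (use s in auto)
  finally show ?thesis by (simp add: mult_ac)
qed

lemma sol_eq_if_eq_at:
  assumes solU: "is_sol c U" and solV: "is_sol c V" and z: "-1 < z" "z < 1" "U z = V z"
    and x: "-1 < x" "x < 1"
  shows "U x = V x"
proof -
  define \<sigma> where "\<sigma> = min (1 - \<bar>z\<bar>) (1 - \<bar>x\<bar>)"
  have s: "0 < \<sigma>" "\<sigma> \<le> 1" unfolding \<sigma>_def using z x by auto
  have "\<bar>U x - V x\<bar> \<le> (\<bar>U z - V z\<bar> + 5 * norm (c - c) / \<sigma>) * exp (((2 + apriori_radius c) / \<sigma> + 1) * \<bar>x - z\<bar>)"
    by (rule sol_diff_gronwall[OF solU solV s]) (use z x in \<open>auto simp: \<sigma>_def\<close>)
  then show ?thesis using z by simp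
qed

lemma sol_gt_if_gt_at:
  assumes solU: "is_sol c U" and solV: "is_sol c V"
    and x0: "-1 < x0" "x0 < 1" "V x0 > U x0" and x: "-1 < x" "x < 1"
  shows "V x > U x"
proof (rule ccontr)
  assume "\<not> V x > U x"
  moreover have "continuous_on {min x x0..max x x0} (\<lambda>t. V t - U t)"
    using x x0 by (intro continuous_on_diff sol_continuous_on[OF solV] sol_continuous_on[OF solU]) auto
  ultimately obtain z where z: "min x x0 \<le> z" "z \<le> max x x0" "V z - U z = 0"
    using IVT'[of "\<lambda>t. V t - U t" x 0 x0] IVT2'[of "\<lambda>t. V t - U t" x 0 x0] x0
    by (cases "x \<le> x0") (auto simp: min_def max_def)
  have "U x0 = V x0" by (rule sol_eq_if_eq_at[OF solU solV, of z]) (use z x x0 in auto)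
  then show False using x0 by simp
qed

lemma has_real_derivative_uniform_limit:
  fixes S :: "real set"
  assumes "convex S"
    and der: "\<And>n x. x \<in> S \<Longrightarrow> (f n has_real_derivative f' n x) (at x within S)"
    and unif: "uniform_limit S f' g' sequentially"
    and "x0 \<in> S" "(\<lambda>n. f n x0) \<longlonglongrightarrow> l"
  shows "\<exists>g. \<forall>x\<in>S. (\<lambda>n. f n x) \<longlonglongrightarrow> g x \<and> (g has_real_derivative g' x) (at x within S)"
  unfolding has_field_derivative_def
proof (rule has_derivative_sequence[where f = f and f' = "\<lambda>n x h. f' n x * h"
      and g' = "\<lambda>x h. g' x * h", OF assms(1) _ _ assms(4,5)])
  show "(f n has_derivative (*) (f' n x)) (at x within S)" if "x \<in> S" for n x
    using der[OF that] by (simp add: has_field_derivative_def)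
  fix e :: real assume "e > 0"
  show "\<forall>\<^sub>F n in sequentially. \<forall>x\<in>S. \<forall>h. norm (f' n x * h - g' x * h) \<le> e * norm h"
    by (rule eventually_mono[OF uniform_limitD[OF unif \<open>e > 0\<close>]])
       (fastforce simp: dist_real_def left_diff_distrib[symmetric] abs_mult intro: mult_right_mono less_imp_le)
qed

lemma sol_sequence_uniform_limit:
  assumes sols: "\<And>n. is_sol (cs n) (Us n)" and cs: "cs \<longlonglongrightarrow> c0" and gs: "(\<lambda>n. Us n 0) \<longlonglongrightarrow> g0"
    and R: "\<And>n. apriori_radius (cs n) \<le> R" and s: "0 < \<sigma>" "\<sigma> \<le> 1"
  shows "uniform_limit {-1 + \<sigma>..1 - \<sigma>} Us (\<lambda>x. lim (\<lambda>n. Us n x)) sequentially"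
  unfolding uniformly_convergent_uniform_limit_iff[symmetric]
proof (rule Cauchy_uniformly_convergent, rule uniformly_Cauchy_onI)
  fix e :: real assume "e > 0"
  define d where "d n = \<bar>Us n 0 - g0\<bar> + norm (cs n - c0)" for n
  define K where "K = (1 + 5 / \<sigma>) * exp ((2 + R) / \<sigma> + 1)"
  have "K > 0" unfolding K_def using s by (simp add: add_pos_nonneg)
  have "d \<longlonglongrightarrow> 0"
    unfolding d_def using tendsto_add[OF tendsto_rabs_zero[OF LIM_zero[OF gs]] tendsto_norm_zero[OF LIM_zero[OF cs]]]
    by simp
  then have "\<forall>\<^sub>F n in sequentially. d n < e / (2 * K)"
    using \<open>e > 0\<close> \<open>K > 0\<close> by (intro order_tendstoD(2)) auto
  then obtain N where N: "\<And>n. n \<ge> N \<Longrightarrow> d n < e / (2 * K)"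
    unfolding eventually_sequentially by blast
  show "\<exists>N. \<forall>x\<in>{-1 + \<sigma>..1 - \<sigma>}. \<forall>m\<ge>N. \<forall>n\<ge>N. dist (Us m x) (Us n x) < e"
  proof (intro exI[of _ N] ballI allI impI)
    fix x m n assume x: "x \<in> {-1 + \<sigma>..1 - \<sigma>}" and "N \<le> m" "N \<le> n"
    have "\<bar>Us m x - Us n x\<bar> \<le> K * (\<bar>Us m 0 - Us n 0\<bar> + norm (cs m - cs n))"
      unfolding K_def by (rule sol_diff_bound[OF sols sols s _ _ R R]) (use x in auto)
    also have "\<dots> \<le> K * (d m + d n)"
      using abs_triangle_ineq4[of "Us m 0 - g0" "Us n 0 - g0"] norm_triangle_ineq4[of "cs m - c0" "cs n - c0"]
        \<open>K > 0\<close> unfolding d_def by (intro mult_left_mono) auto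
    also have "\<dots> < K * (e / (2 * K) + e / (2 * K))"
      using N \<open>N \<le> m\<close> \<open>N \<le> n\<close> \<open>K > 0\<close> by (intro mult_strict_left_mono add_strict_mono) auto
    also have "\<dots> = e" using \<open>K > 0\<close> by simp
    finally show "dist (Us m x) (Us n x) < e" by (simp add: dist_real_def)
  qed
qed

lemma riccati_slope_uniform_limit:
  assumes sols: "\<And>n. is_sol (cs n) (Us n)" and cs: "cs \<longlonglongrightarrow> c0"
    and R: "\<And>n. apriori_radius (cs n) \<le> R" and s: "0 < \<sigma>" "\<sigma> \<le> 1"
    and unif: "uniform_limit {-1 + \<sigma>..1 - \<sigma>} Us U0 sequentially"
  shows "uniform_limit {-1 + \<sigma>..1 - \<sigma>} (\<lambda>n t. riccati_rhs (cs n) t (Us n t) / (1 - t\<^sup>2))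
    (\<lambda>t. riccati_rhs c0 t (U0 t) / (1 - t\<^sup>2)) sequentially"
proof (rule uniform_limitI)
  fix e :: real assume "e > 0"
  define S where "S = {-1 + \<sigma>..1 - \<sigma>}"
  have inS: "-1 < t" "t < 1" "1 - t\<^sup>2 \<ge> \<sigma>" if "t \<in> S" for t
    using that s one_minus_sq_ge[of \<sigma> t] unfolding S_def by auto
  have R9: "R \<ge> 9" using R[of 0] apriori_radius_ge_9[of "cs 0"] by linarith
  have bnd: "\<bar>Us n t\<bar> \<le> R" if "t \<in> S" for n t
    using sol_abs_less_apriori_radius[OF sols[of n] inS(1,2)[OF that]] R[of n] by linarith
  have bnd0: "\<bar>U0 t\<bar> \<le> R" if "t \<in> S" for t
  proof (rule tendsto_le[OF trivial_limit_sequentially tendsto_const])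
    show "(\<lambda>n. \<bar>Us n t\<bar>) \<longlonglongrightarrow> \<bar>U0 t\<bar>"
      using that unfolding S_def by (intro tendsto_rabs tendsto_uniform_limitI[OF unif])
  qed (use bnd that in simp)
  define e' where "e' = e * \<sigma> / (7 + R)"
  have "e' > 0" unfolding e'_def using \<open>e > 0\<close> s R9 by simp
  have "\<forall>\<^sub>F n in sequentially. norm (cs n - c0) < e'"
    using tendsto_norm_zero[OF LIM_zero[OF cs]] \<open>e' > 0\<close> by (auto simp: order_tendsto_iff)
  moreover have "\<forall>\<^sub>F n in sequentially. \<forall>t\<in>S. dist (Us n t) (U0 t) < e'"
    using uniform_limitD[OF unif \<open>e' > 0\<close>] unfolding S_def .
  ultimately have "\<forall>\<^sub>F n in sequentially. norm (cs n - c0) < e' \<and> (\<forall>t\<in>S. dist (Us n t) (U0 t) < e')"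
    by (rule eventually_conj)
  then show "\<forall>\<^sub>F n in sequentially. \<forall>t\<in>{-1 + \<sigma>..1 - \<sigma>}.
      dist (riccati_rhs (cs n) t (Us n t) / (1 - t\<^sup>2)) (riccati_rhs c0 t (U0 t) / (1 - t\<^sup>2)) < e"
    unfolding S_def[symmetric]
  proof (rule eventually_mono, intro ballI)
    fix n t assume close: "norm (cs n - c0) < e' \<and> (\<forall>t\<in>S. dist (Us n t) (U0 t) < e')" and "t \<in> S"
    have "\<bar>riccati_rhs (cs n) t (Us n t) - riccati_rhs c0 t (U0 t)\<bar>
        \<le> 5 * norm (cs n - c0) + (2 + R) * \<bar>Us n t - U0 t\<bar>"
      by (rule riccati_rhs_lipschitz[OF inS(1,2) bnd bnd0]) (use \<open>t \<in> S\<close> in auto)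
    also have "\<dots> < 5 * e' + (2 + R) * e'"
      using close \<open>t \<in> S\<close> R9 by (intro add_less_le_mono mult_left_mono) (auto simp: dist_real_def)
    also have "\<dots> = (7 + R) * e'" by (simp add: algebra_simps)
    also have "\<dots> = e * \<sigma>" unfolding e'_def using R9 by simp
    finally have "\<bar>riccati_rhs (cs n) t (Us n t) - riccati_rhs c0 t (U0 t)\<bar> / (1 - t\<^sup>2) < e * \<sigma> / \<sigma>"
      using inS[OF \<open>t \<in> S\<close>] s \<open>e > 0\<close> by (intro frac_less) auto
    then show "dist (riccati_rhs (cs n) t (Us n t) / (1 - t\<^sup>2)) (riccati_rhs c0 t (U0 t) / (1 - t\<^sup>2)) < e"
      using s inS(3)[OF \<open>t \<in> S\<close>] by (simp add: dist_real_def diff_divide_distrib[symmetric])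
  qed
qed

lemma is_sol_uniform_limit:
  assumes sols: "\<And>n. is_sol (cs n) (Us n)" and cs: "cs \<longlonglongrightarrow> c0"
    and R: "\<And>n. apriori_radius (cs n) \<le> R"
    and unif: "\<And>\<sigma>. 0 < \<sigma> \<Longrightarrow> \<sigma> \<le> 1 \<Longrightarrow> uniform_limit {-1 + \<sigma>..1 - \<sigma>} Us U0 sequentially"
  shows "is_sol c0 U0"
  unfolding is_sol_iff_has_derivative
proof (intro allI impI)
  fix x :: real assume "-1 < x \<and> x < 1"
  define \<sigma> where "\<sigma> = (1 - \<bar>x\<bar>) / 2"
  have s: "0 < \<sigma>" "\<sigma> \<le> 1" "-1 + \<sigma> < x" "x < 1 - \<sigma>"
    unfolding \<sigma>_def using \<open>-1 < x \<and> x < 1\<close> by (auto simp: abs_if field_simps)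
  define S where "S = {-1 + \<sigma>..1 - \<sigma>}"
  have lim: "(\<lambda>n. Us n t) \<longlonglongrightarrow> U0 t" if "t \<in> S" for t
    using tendsto_uniform_limitI[OF unif[OF s(1,2)]] that unfolding S_def by blast
  have der: "(Us n has_real_derivative riccati_rhs (cs n) t (Us n t) / (1 - t\<^sup>2)) (at t within S)"
    if "t \<in> S" for n t
  proof -
    have "-1 < t" "t < 1" using that s unfolding S_def by auto
    then show ?thesis by (rule has_field_derivative_at_within[OF sol_has_derivative[OF sols]])
  qed
  have "x \<in> S" "x \<in> interior S" "convex S" using s unfolding S_def by auto
  have "uniform_limit S (\<lambda>n t. riccati_rhs (cs n) t (Us n t) / (1 - t\<^sup>2))
      (\<lambda>t. riccati_rhs c0 t (U0 t) / (1 - t\<^sup>2)) sequentially"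
    unfolding S_def by (rule riccati_slope_uniform_limit[OF sols cs R s(1,2) unif[OF s(1,2)]])
  from has_real_derivative_uniform_limit[OF \<open>convex S\<close> der this \<open>x \<in> S\<close> lim[OF \<open>x \<in> S\<close>]]
  obtain g where g: "\<forall>t\<in>S. (\<lambda>n. Us n t) \<longlonglongrightarrow> g t \<and>
      (g has_real_derivative riccati_rhs c0 t (U0 t) / (1 - t\<^sup>2)) (at t within S)"
    by blast
  show "(U0 has_real_derivative riccati_rhs c0 x (U0 x) / (1 - x\<^sup>2)) (at x)"
  proof (rule has_field_derivative_transform_within_open[of g _ x "interior S"])
    show "(g has_real_derivative riccati_rhs c0 x (U0 x) / (1 - x\<^sup>2)) (at x)"
      using g \<open>x \<in> S\<close> at_within_interior[OF \<open>x \<in> interior S\<close>] by metis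
    show "g t = U0 t" if "t \<in> interior S" for t
    proof -
      have "t \<in> S" using that interior_subset by blast
      with g show ?thesis using LIMSEQ_unique[OF _ lim[OF \<open>t \<in> S\<close>]] by blast
    qed
  qed (use \<open>x \<in> interior S\<close> in auto)
qed

lemma sol_exists_at_limit_point:
  assumes near: "\<And>r. r > 0 \<Longrightarrow> \<exists>c g U. dist (c, g) (c0, g0) < r \<and> is_sol c U \<and> U 0 = g"
  shows "\<exists>U0. is_sol c0 U0 \<and> U0 0 = g0"
proof -
  have "\<forall>n. \<exists>p. dist (fst p, fst (snd p)) (c0, g0) < inverse (real (Suc n))
      \<and> is_sol (fst p) (snd (snd p)) \<and> snd (snd p) 0 = fst (snd p)"
  proof
    fix n
    obtain c g U where "dist (c, g) (c0, g0) < inverse (real (Suc n))" "is_sol c U" "U 0 = g"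
      using near[of "inverse (real (Suc n))"] by auto
    then show "\<exists>p. dist (fst p, fst (snd p)) (c0, g0) < inverse (real (Suc n))
        \<and> is_sol (fst p) (snd (snd p)) \<and> snd (snd p) 0 = fst (snd p)"
      by (intro exI[of _ "(c, g, U)"]) simp
  qed
  then obtain T where T: "\<And>n. dist (fst (T n), fst (snd (T n))) (c0, g0) < inverse (real (Suc n))"
      "\<And>n. is_sol (fst (T n)) (snd (snd (T n)))" "\<And>n. snd (snd (T n)) 0 = fst (snd (T n))"
    by (metis choice)
  define cs where "cs n = fst (T n)" for n
  define Us where "Us n = snd (snd (T n))" for n
  have sols: "is_sol (cs n) (Us n)" for n using T(2) unfolding cs_def Us_def .
  have "(\<lambda>n. dist (cs n, Us n 0) (c0, g0)) \<longlonglongrightarrow> 0"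
  proof (rule Lim_null_comparison[OF _ LIMSEQ_inverse_real_of_nat])
    have "dist (cs n, Us n 0) (c0, g0) < inverse (real (Suc n))" for n
      using T(1,3)[of n] unfolding cs_def Us_def by simp
    then show "\<forall>\<^sub>F n in sequentially. norm (dist (cs n, Us n 0) (c0, g0)) \<le> inverse (real (Suc n))"
      by (intro always_eventually allI) (simp add: order.strict_implies_order)
  qed
  then have "(\<lambda>n. (cs n, Us n 0)) \<longlonglongrightarrow> (c0, g0)" by (rule tendsto_dist_iff[THEN iffD2])
  then have cs: "cs \<longlonglongrightarrow> c0" and gs: "(\<lambda>n. Us n 0) \<longlonglongrightarrow> g0"
    using tendsto_fst tendsto_snd by fastforce+
  have R: "apriori_radius (cs n) \<le> 14 + 5 * norm c0" for n
  proof -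
    have "dist (cs n) c0 \<le> dist (cs n, Us n 0) (c0, g0)"
      using dist_fst_le[of "(cs n, Us n 0)" "(c0, g0)"] by simp
    also have "\<dots> < inverse (real (Suc n))" using T(1,3)[of n] unfolding cs_def Us_def by simp
    also have "\<dots> \<le> 1" by (simp add: inverse_le_1_iff)
    finally have "norm (cs n) \<le> norm c0 + 1" using norm_triangle_ineq2[of "cs n" c0] by (simp add: dist_norm)
    then show ?thesis using apriori_radius_le_norm[of "cs n"] by linarith
  qed
  define U0 where "U0 x = lim (\<lambda>n. Us n x)" for x
  have unif: "uniform_limit {-1 + \<sigma>..1 - \<sigma>} Us U0 sequentially" if "0 < \<sigma>" "\<sigma> \<le> 1" for \<sigma>
    unfolding U0_def by (rule sol_sequence_uniform_limit[OF sols cs gs R that])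
  have "U0 0 = g0"
    using LIMSEQ_unique[OF tendsto_uniform_limitI[OF unif[of 1]] gs] by simp
  then show ?thesis using is_sol_uniform_limit[OF sols cs R unif] by blast
qed

section \<open>Behaviour near \<open>x = -1\<close>\<close>

definition beta :: "param \<Rightarrow> real \<Rightarrow> real \<Rightarrow> real" where
  "beta c a x = cc2 c - cc1 c + cc3 c * (1 - x) - 2 * (2 - 2 * a)"

text \<open>In the variable \<open>v = U - (2 - 2a)\<close> the right-hand side is \<open>v(2a - v/2)\<close> up to terms of order
  \<open>1 + x\<close>, whose coefficient is \<open>beta\<close>.\<close>

lemma riccati_rhs_shifted:
  assumes "a\<^sup>2 = 1 + cc1 c"
  shows "riccati_rhs c x (2 - 2 * a + v) = v * (2 * a - v / 2 - 2 * (1 + x)) + (1 + x) * beta c a x"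
  using assms unfolding riccati_rhs_def Pc_def beta_def
  by (simp add: field_simps power2_eq_square)

lemma abs_beta_le:
  assumes "-1 < x" "x < 1" "a \<ge> 0"
  shows "\<bar>beta c a x\<bar> \<le> \<bar>cc2 c\<bar> + \<bar>cc1 c\<bar> + 2 * \<bar>cc3 c\<bar> + 4 + 4 * a"
proof -
  have "\<bar>cc3 c\<bar> * \<bar>1 - x\<bar> \<le> \<bar>cc3 c\<bar> * 2" using assms by (intro mult_left_mono) auto
  then have "\<bar>cc3 c * (1 - x)\<bar> \<le> 2 * \<bar>cc3 c\<bar>" by (simp add: abs_mult mult.commute)
  moreover have "\<bar>2 * (2 - 2 * a)\<bar> \<le> 4 + 4 * a" using assms by (simp add: abs_le_iff)
  ultimately show ?thesis unfolding beta_def by (simp add: abs_le_iff) linarith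
qed

lemma shifted_rhs_dominates:
  assumes a: "a\<^sup>2 = 1 + cc1 c" and \<mu>: "0 \<le> \<mu>" "\<epsilon> \<le> a - \<mu>"
    and t: "0 < 1 + t" "4 * (1 + t) \<le> \<epsilon>"
    and B: "\<bar>beta c a t\<bar> \<le> B" and w: "w \<le> \<epsilon>" "(1 + t) * B < \<bar>w\<bar> * \<epsilon>"
  shows "w * (riccati_rhs c t (2 - 2 * a + w) - \<mu> * w * (1 - t)) > 0"
proof -
  define s where "s = 1 + t"
  have "2 * a - 2 * \<mu> - w / 2 - 2 * s + \<mu> * s \<ge> \<epsilon>"
    using \<mu> t w mult_nonneg_nonneg[of \<mu> s] unfolding s_def by linarith
  then have "w\<^sup>2 * (2 * a - 2 * \<mu> - w / 2 - 2 * s + \<mu> * s) \<ge> w\<^sup>2 * \<epsilon>"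
    by (intro mult_left_mono) auto
  moreover have "\<bar>w * (s * beta c a t)\<bar> \<le> \<bar>w\<bar> * (s * B)"
    using t B unfolding s_def abs_mult by (intro mult_left_mono) auto
  then have "w * (s * beta c a t) \<ge> - (\<bar>w\<bar> * (s * B))" by linarith
  moreover have "(1 + t) * B \<ge> 0" using t(1) B abs_ge_zero[of "beta c a t"] by simp
  then have "\<bar>w\<bar> > 0" using w(2) by (cases "w = 0") auto
  then have "\<bar>w\<bar> * (s * B) < \<bar>w\<bar> * (\<bar>w\<bar> * \<epsilon>)"
    using w unfolding s_def by (intro mult_strict_left_mono) auto
  moreover have "w * (riccati_rhs c t (2 - 2 * a + w) - \<mu> * w * (1 - t))
      = w\<^sup>2 * (2 * a - 2 * \<mu> - w / 2 - 2 * s + \<mu> * s) + w * (s * beta c a t)"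
    unfolding riccati_rhs_shifted[OF a] s_def by (simp add: algebra_simps power2_eq_square)
  moreover have "\<bar>w\<bar> * (\<bar>w\<bar> * \<epsilon>) = w\<^sup>2 * \<epsilon>" by (simp add: power2_eq_square abs_mult_self_eq)
  ultimately show ?thesis by linarith
qed

lemma has_real_derivative_powr_shift:
  "0 < 1 + t \<Longrightarrow> ((\<lambda>t. (1 + t) powr \<mu>) has_real_derivative \<mu> * (1 + t) powr (\<mu> - 1)) (at t)"
  by (rule DERIV_cong[OF DERIV_fun_powr[of "\<lambda>t. 1 + t" 1]]) (auto intro!: derivative_eq_intros)

text \<open>\<open>\<sigma> = 1\<close> and \<open>\<sigma> = -1\<close> select the upper and the lower barrier \<open>2 - 2a + \<sigma> A (1 + x)\<^bsup>\<mu>\<^esup>\<close>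
  (\<open>\<mu> < a\<close>); a solution on the inner side of it at \<open>x = -1 + s\<^sub>0\<close> stays there down to \<open>x = -1\<close>.\<close>

lemma power_barrier_crossing:
  assumes a: "a\<^sup>2 = 1 + cc1 c" and sgn: "\<bar>\<sigma>\<bar> = 1"
    and \<mu>: "0 \<le> \<mu>" "\<mu> \<le> 1" "\<epsilon> \<le> a - \<mu>"
    and t: "-1 < t" "4 * (1 + t) \<le> \<epsilon>" "1 + t \<le> 1"
    and B: "\<bar>beta c a t\<bar> \<le> B" and A: "0 < A" "B < A * \<epsilon>"
    and small: "\<sigma> = 1 \<Longrightarrow> A * (1 + t) powr \<mu> \<le> \<epsilon>"
    and contact: "\<sigma> * (u - (2 - 2 * a)) = A * (1 + t) powr \<mu>"
  shows "A * (\<mu> * (1 + t) powr (\<mu> - 1)) - \<sigma> * (riccati_rhs c t u / (1 - t\<^sup>2)) < 0"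
proof -
  define s where "s = 1 + t"
  define w where "w = u - (2 - 2 * a)"
  have s: "0 < s" "s \<le> 1" using t unfolding s_def by auto
  have \<sigma>w: "\<sigma> * w = A * s powr \<mu>" using contact unfolding w_def s_def .
  then have "\<sigma> * w > 0" using A s by simp
  have abs_w: "\<bar>w\<bar> = A * s powr \<mu>"
    using \<sigma>w sgn by (metis abs_mult abs_of_pos mult_1 \<open>\<sigma> * w > 0\<close>)
  have "w \<le> \<epsilon>"
  proof (cases "\<sigma> = 1")
    case True
    then show ?thesis using \<sigma>w small unfolding s_def by simp
  next
    case False
    then have "\<sigma> = -1" using sgn by (simp add: abs_if split: if_splits)
    then show ?thesis using \<open>\<sigma> * w > 0\<close> t by simp
  qed
  moreover have "s * B < \<bar>w\<bar> * \<epsilon>"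
  proof -
    have "B \<ge> 0" using B by linarith
    have "s \<le> s powr \<mu>" using powr_mono'[of \<mu> 1 s] s \<mu> by simp
    then have "s * B \<le> s powr \<mu> * B" using \<open>B \<ge> 0\<close> by (simp add: mult_right_mono)
    also have "\<dots> < s powr \<mu> * (A * \<epsilon>)" using A s by (intro mult_strict_left_mono) auto
    finally show ?thesis unfolding abs_w by (simp add: mult_ac)
  qed
  ultimately have "w * (riccati_rhs c t (2 - 2 * a + w) - \<mu> * w * (1 - t)) > 0"
    using shifted_rhs_dominates[OF a \<mu>(1,3), of t B w] B t unfolding s_def by auto
  then have wX: "w * (riccati_rhs c t u - \<mu> * w * (1 - t)) > 0" unfolding w_def by simp
  define X where "X = riccati_rhs c t u - \<mu> * w * (1 - t)"
  have "(\<sigma> * X) * (\<sigma> * w) = (\<sigma> * \<sigma>) * (w * X)" by (simp add: algebra_simps)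
  moreover have "\<sigma> * \<sigma> = 1" using sgn by (metis abs_mult_self_eq mult_1)
  ultimately have "(\<sigma> * X) * (\<sigma> * w) > 0" using wX unfolding X_def by (metis mult_1)
  then have pos: "\<sigma> * X > 0" using \<open>\<sigma> * w > 0\<close> zero_less_mult_pos2 by blast
  have P: "A * (\<mu> * (1 + t) powr (\<mu> - 1)) = \<mu> * (\<sigma> * w) / s"
    unfolding \<sigma>w s_def using s by (simp add: powr_diff s_def)
  have d: "1 - t\<^sup>2 = s * (1 - t)" unfolding s_def by (simp add: power2_eq_square algebra_simps)
  have "1 - t > 0" using t by simp
  have "A * (\<mu> * (1 + t) powr (\<mu> - 1)) - \<sigma> * (riccati_rhs c t u / (1 - t\<^sup>2))
      = \<mu> * (\<sigma> * w) / s - \<sigma> * (riccati_rhs c t u / (s * (1 - t)))"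
    unfolding P d ..
  also have "\<dots> = - (\<sigma> * X) / (s * (1 - t))"
    unfolding X_def using s \<open>1 - t > 0\<close> by (simp add: field_simps)
  also have "\<dots> < 0" using pos s \<open>1 - t > 0\<close> by (simp add: divide_neg_pos)
  finally show ?thesis .
qed

lemma sol_trapped_by_power:
  assumes sol: "is_sol c U" and a: "a\<^sup>2 = 1 + cc1 c" and sgn: "\<bar>\<sigma>\<bar> = 1"
    and \<mu>: "0 \<le> \<mu>" "\<mu> \<le> 1" "\<epsilon> \<le> a - \<mu>"
    and s0: "0 < s0" "4 * s0 \<le> \<epsilon>" "s0 \<le> 1"
    and B: "\<And>t. -1 < t \<Longrightarrow> t < 1 \<Longrightarrow> \<bar>beta c a t\<bar> \<le> B" and A: "B < A * \<epsilon>"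
    and small: "\<sigma> = 1 \<Longrightarrow> A * s0 powr \<mu> \<le> \<epsilon>"
    and start: "\<sigma> * (U (-1 + s0) - (2 - 2 * a)) \<le> A * s0 powr \<mu>"
    and x: "-1 < x" "x \<le> -1 + s0"
  shows "\<sigma> * (U x - (2 - 2 * a)) \<le> A * (1 + x) powr \<mu>"
proof -
  have "A > 0" using A B[of 0] s0 zero_less_mult_pos2[of A \<epsilon>] by linarith
  define f where "f t = A * (1 + t) powr \<mu> - \<sigma> * (U t - (2 - 2 * a))" for t
  have "f x \<ge> 0"
  proof (rule nonneg_propagates_left[of x "-1 + s0" f
        "\<lambda>t. A * (\<mu> * (1 + t) powr (\<mu> - 1)) - \<sigma> * (riccati_rhs c t (U t) / (1 - t\<^sup>2))"])
    fix t assume t: "x \<le> t" "t \<le> -1 + s0"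
    then have t1: "-1 < t" "t < 1" using x s0 by auto
    show "(f has_real_derivative
        A * (\<mu> * (1 + t) powr (\<mu> - 1)) - \<sigma> * (riccati_rhs c t (U t) / (1 - t\<^sup>2))) (at t)"
      unfolding f_def using t1 sol_has_derivative[OF sol t1]
      by (auto intro!: derivative_eq_intros has_real_derivative_powr_shift)
    assume "f t = 0"
    then have contact: "\<sigma> * (U t - (2 - 2 * a)) = A * (1 + t) powr \<mu>" unfolding f_def by simp
    have "A * (1 + t) powr \<mu> \<le> A * s0 powr \<mu>" using t1 t \<mu> \<open>A > 0\<close> by (simp add: powr_mono2)
    then have small': "A * (1 + t) powr \<mu> \<le> \<epsilon>" if "\<sigma> = 1" using small[OF that] by linarith
    show "A * (\<mu> * (1 + t) powr (\<mu> - 1)) - \<sigma> * (riccati_rhs c t (U t) / (1 - t\<^sup>2)) < 0"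
      by (rule power_barrier_crossing[OF a sgn \<mu> t1(1) _ _ B[OF t1] \<open>A > 0\<close> A small' contact])
         (use t s0 in auto)
  qed (use x start in \<open>auto simp: f_def\<close>)
  then show ?thesis unfolding f_def by simp
qed

lemma sol_below_upper_band_leftwards:
  assumes sol: "is_sol c U" and a: "a > 0" "a\<^sup>2 = 1 + cc1 c"
    and B: "\<And>t. -1 < t \<Longrightarrow> t < 1 \<Longrightarrow> \<bar>beta c a t\<bar> \<le> B"
    and s1: "0 < s1" "s1 < 2" "s1 * (6 * a + B) \<le> a\<^sup>2 / 4"
    and start: "U (-1 + s1) - (2 - 2 * a) < 3 * a"
    and t: "-1 < t" "t \<le> -1 + s1"
  shows "U t - (2 - 2 * a) \<le> 3 * a"
proof -
  have "3 * a - (U t - (2 - 2 * a)) \<ge> 0"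
  proof (rule nonneg_propagates_left[of t "-1 + s1" _ "\<lambda>t. - (riccati_rhs c t (U t) / (1 - t\<^sup>2))"])
    fix u assume u: "t \<le> u" "u \<le> -1 + s1"
    then have u1: "-1 < u" "u < 1" using t s1 by auto
    show "((\<lambda>t. 3 * a - (U t - (2 - 2 * a))) has_real_derivative
        - (riccati_rhs c u (U u) / (1 - u\<^sup>2))) (at u)"
      using sol_has_derivative[OF sol u1] by (auto intro!: derivative_eq_intros)
    assume "3 * a - (U u - (2 - 2 * a)) = 0"
    then have "U u = 2 - 2 * a + 3 * a" by simp
    then have "riccati_rhs c u (U u) = 3 * a * (2 * a - 3 * a / 2 - 2 * (1 + u)) + (1 + u) * beta c a u"
      using riccati_rhs_shifted[OF a(2), of u "3 * a"] by metis
    moreover have "(1 + u) * beta c a u \<ge> - ((1 + u) * B)"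
      using B[OF u1] u1 mult_left_mono[of "- beta c a u" B "1 + u"] by (simp add: abs_le_iff)
    moreover have "(1 + u) * (6 * a + B) \<le> s1 * (6 * a + B)"
      using u t B[OF u1] a by (intro mult_right_mono) auto
    moreover have "3 * a * (2 * a - 3 * a / 2 - 2 * (1 + u)) = 3 / 2 * a\<^sup>2 - 6 * a * (1 + u)"
      by (simp add: algebra_simps power2_eq_square)
    moreover have "(1 + u) * (6 * a + B) = 6 * a * (1 + u) + (1 + u) * B" by (simp add: algebra_simps)
    moreover have "a\<^sup>2 > 0" using a(1) by simp
    ultimately have "riccati_rhs c u (U u) > 0" using s1(3) by linarith
    moreover have "1 - u\<^sup>2 > 0" using u1 by (simp add: abs_square_less_1)
    ultimately show "- (riccati_rhs c u (U u) / (1 - u\<^sup>2)) < 0" by simp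
  qed (use t s1 start in auto)
  then show ?thesis by simp
qed

lemma riccati_rhs_ge_in_band:
  assumes a: "a > 0" "a\<^sup>2 = 1 + cc1 c" and \<eta>: "0 < \<eta>"
    and t: "-1 < t" and B: "\<bar>beta c a t\<bar> \<le> B" and small: "(1 + t) * (6 * a + B) \<le> \<eta> * a / 4"
    and w: "\<eta> < w" "w \<le> 3 * a"
  shows "riccati_rhs c t (2 - 2 * a + w) \<ge> \<eta> * a / 4"
proof -
  have "\<eta> * a \<le> w * (4 * a - w)" using w \<eta> a by (intro mult_mono) auto
  moreover have "2 * ((1 + t) * w) \<le> 6 * (a * (1 + t))"
    using w t mult_left_mono[of w "3 * a" "1 + t"] by (simp add: algebra_simps)
  moreover have "(1 + t) * beta c a t \<ge> - ((1 + t) * B)"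
    using B t mult_left_mono[of "- beta c a t" B "1 + t"] by (simp add: abs_le_iff)
  moreover have "riccati_rhs c t (2 - 2 * a + w) = w * (4 * a - w) / 2 - 2 * ((1 + t) * w) + (1 + t) * beta c a t"
    unfolding riccati_rhs_shifted[OF a(2)] by (simp add: field_simps)
  moreover have "(1 + t) * (6 * a + B) = 6 * (a * (1 + t)) + (1 + t) * B" by (simp add: algebra_simps)
  ultimately show ?thesis using small by linarith
qed

text \<open>Inside the band \<open>U' \<ge> \<eta>a / (8(1 + x))\<close>, so \<open>U\<close> would decrease without bound towards
  \<open>x = -1\<close>.\<close>

lemma sol_leaves_band_near_left_end:
  assumes sol: "is_sol c U" and a: "a > 0" "a\<^sup>2 = 1 + cc1 c" and \<eta>: "0 < \<eta>" "\<eta> \<le> a"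
    and B: "\<And>t. -1 < t \<Longrightarrow> t < 1 \<Longrightarrow> \<bar>beta c a t\<bar> \<le> B"
    and s1: "0 < s1" "s1 \<le> 1/2" "s1 * (6 * a + B) \<le> \<eta> * a / 4"
    and start: "U (-1 + s1) - (2 - 2 * a) < 3 * a"
  shows "\<exists>s. 0 < s \<and> s \<le> s1 \<and> U (-1 + s) - (2 - 2 * a) \<le> \<eta>"
proof (rule ccontr)
  assume "\<not> ?thesis"
  then have above: "U (-1 + s) - (2 - 2 * a) > \<eta>" if "0 < s" "s \<le> s1" for s
    using that by force
  have "\<eta> * a \<le> a\<^sup>2" unfolding power2_eq_square using \<eta> a by (intro mult_right_mono) auto
  then have below: "U t - (2 - 2 * a) \<le> 3 * a" if "-1 < t" "t \<le> -1 + s1" for t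
    using sol_below_upper_band_leftwards[OF sol a B s1(1) _ _ start that] s1 by simp
  define \<kappa> where "\<kappa> = \<eta> * a / 8"
  have \<kappa>: "\<kappa> > 0" unfolding \<kappa>_def using \<eta> a by simp
  define q where "q = (3 * a + 1) / \<kappa>"
  define x where "x = -1 + s1 * exp (- q)"
  have "q \<ge> 0" unfolding q_def using \<kappa> a by simp
  then have x: "-1 < x" "x \<le> -1 + s1"
    unfolding x_def using s1 mult_left_le[of "exp (- q)" s1] by auto
  have "U x - \<kappa> * ln (1 + x) \<le> U (-1 + s1) - \<kappa> * ln (1 + (-1 + s1))"
  proof (rule DERIV_nonneg_imp_nondecreasing[OF x(2)])
    fix t assume t: "x \<le> t" "t \<le> -1 + s1"
    then have t1: "-1 < t" "t < 1" using x s1 by auto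
    have der: "((\<lambda>t. U t - \<kappa> * ln (1 + t)) has_real_derivative
        riccati_rhs c t (U t) / (1 - t\<^sup>2) - \<kappa> * (1 / (1 + t))) (at t)"
      using t1 sol_has_derivative[OF sol t1] by (auto intro!: derivative_eq_intros)
    have "\<eta> < U t - (2 - 2 * a)" "U t - (2 - 2 * a) \<le> 3 * a"
      using above[of "1 + t"] below[OF t1(1) t(2)] t1 t by auto
    moreover have "(1 + t) * (6 * a + B) \<le> \<eta> * a / 4"
      using t1 t s1 B[OF t1] a mult_right_mono[of "1 + t" s1 "6 * a + B"] by auto
    ultimately have rhs: "riccati_rhs c t (U t) \<ge> \<eta> * a / 4"
      using riccati_rhs_ge_in_band[OF a \<eta>(1) t1(1) B[OF t1], of "U t - (2 - 2 * a)"] by simp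
    have pos: "1 - t\<^sup>2 > 0" using t1 by (simp add: abs_square_less_1)
    have "\<kappa> * (1 / (1 + t)) = (\<eta> * a / 4) / (2 * (1 + t))" unfolding \<kappa>_def using t1 by simp
    also have "\<dots> \<le> (\<eta> * a / 4) / (1 - t\<^sup>2)"
      using pos one_minus_sq_le_double[of t] \<eta> a by (intro divide_left_mono) auto
    also have "\<dots> \<le> riccati_rhs c t (U t) / (1 - t\<^sup>2)" using rhs pos by (intro divide_right_mono) auto
    finally have "\<kappa> * (1 / (1 + t)) \<le> riccati_rhs c t (U t) / (1 - t\<^sup>2)" .
    then show "\<exists>y. ((\<lambda>t. U t - \<kappa> * ln (1 + t)) has_real_derivative y) (at t) \<and> 0 \<le> y"
      using der by force
  qed
  moreover have "\<kappa> * ln (1 + x) = \<kappa> * ln s1 - (3 * a + 1)"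
    unfolding x_def q_def using s1 \<kappa> by (simp add: ln_mult algebra_simps) (simp add: field_simps)
  moreover have "U x - (2 - 2 * a) > \<eta>" using above[of "1 + x"] x by simp
  ultimately show False using start \<eta> by simp
qed

lemma sol_gap_log_nonincreasing:
  assumes solU: "is_sol c U" and solV: "is_sol c V" and a: "a > 0" and t: "-1 < t" "t < 1"
    and above: "U t - (2 - 2 * a) \<ge> 3 * a" and gap: "V t > U t"
  shows "\<exists>y. ((\<lambda>t. ln (V t - U t) + a / 2 * ln (1 + t)) has_real_derivative y) (at t) \<and> y \<le> 0"
proof -
  define W where "W t = V t - U t" for t
  have W: "W t > 0" using gap unfolding W_def by simp
  have pos: "1 - t\<^sup>2 > 0" using t by (simp add: abs_square_less_1)
  have "(W has_real_derivative riccati_rhs c t (V t) / (1 - t\<^sup>2) - riccati_rhs c t (U t) / (1 - t\<^sup>2)) (at t)"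
    unfolding W_def using sol_has_derivative[OF solV t] sol_has_derivative[OF solU t] by (rule DERIV_diff)
  from DERIV_chain2[OF DERIV_ln_divide[OF W] this]
  have "((\<lambda>t. ln (W t)) has_real_derivative
      1 / W t * (riccati_rhs c t (V t) / (1 - t\<^sup>2) - riccati_rhs c t (U t) / (1 - t\<^sup>2))) (at t)" .
  moreover have "((\<lambda>t. a / 2 * ln (1 + t)) has_real_derivative a / 2 * (1 / (1 + t))) (at t)"
    using t by (auto intro!: derivative_eq_intros simp: field_simps)
  ultimately have der: "((\<lambda>t. ln (W t) + a / 2 * ln (1 + t)) has_real_derivative
      1 / W t * (riccati_rhs c t (V t) / (1 - t\<^sup>2) - riccati_rhs c t (U t) / (1 - t\<^sup>2))
        + a / 2 * (1 / (1 + t))) (at t)"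
    by (rule DERIV_add)
  have "riccati_rhs c t (V t) - riccati_rhs c t (U t) = - W t * (2 * t + (V t + U t) / 2)"
    unfolding riccati_rhs_def W_def by (simp add: field_simps power2_eq_square)
  then have "1 / W t * (riccati_rhs c t (V t) / (1 - t\<^sup>2) - riccati_rhs c t (U t) / (1 - t\<^sup>2))
      = - ((2 * t + (V t + U t) / 2) / (1 - t\<^sup>2))"
    using W pos by (simp add: diff_divide_distrib[symmetric])
  also have "\<dots> \<le> - (a / (1 - t\<^sup>2))"
  proof -
    have "(V t + U t) / 2 \<ge> U t" using gap by simp
    then have "a \<le> 2 * t + (V t + U t) / 2" using above t by linarith
    then show ?thesis using pos by (simp add: divide_right_mono)
  qed
  also have "\<dots> \<le> - (a / (2 * (1 + t)))"
    using a pos one_minus_sq_le_double[of t] by (simp add: divide_left_mono)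
  finally show ?thesis using der unfolding W_def by (intro exI[of _ _]) auto
qed

text \<open>By the previous lemma the gap between two solutions above \<open>2 + a\<close> grows at least like
  \<open>(1 + x)\<^bsup>-a/2\<^esup>\<close> towards \<open>x = -1\<close>, which the a priori bound forbids.\<close>

lemma sol_maximal_near_upper_root:
  assumes solU: "is_sol c U" and a: "a > 0" and s2: "0 < s2" "s2 < 1"
    and above: "\<And>s. 0 < s \<Longrightarrow> s \<le> s2 \<Longrightarrow> U (-1 + s) - (2 - 2 * a) \<ge> 3 * a"
    and solV: "is_sol c V" and x: "-1 < x" "x < 1"
  shows "V x \<le> U x"
proof (rule ccontr)
  assume "\<not> V x \<le> U x"
  then have gap: "V t > U t" if "-1 < t" "t < 1" for t
    using sol_gt_if_gt_at[OF solU solV x] that by simp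
  define W where "W t = V t - U t" for t
  define x2 where "x2 = -1 + s2"
  have x2: "-1 < x2" "x2 < 1" using s2 unfolding x2_def by auto
  have W: "0 < W t" "W t < 2 * apriori_radius c" if "-1 < t" "t < 1" for t
    using gap[OF that] sol_abs_less_apriori_radius[OF solU that] sol_abs_less_apriori_radius[OF solV that]
    unfolding W_def by auto
  define K where "K = ln (2 * apriori_radius c) - ln (W x2) + 1"
  have "K \<ge> 0" using W[OF x2] unfolding K_def by simp
  define y where "y = -1 + s2 * exp (- (2 / a) * K)"
  have "exp (- (2 / a) * K) \<le> 1" using \<open>K \<ge> 0\<close> a by simp
  then have y: "-1 < y" "y \<le> x2"
    unfolding y_def x2_def using s2 mult_left_le[of "exp (- (2 / a) * K)" s2] by auto
  have "ln (W y) + a / 2 * ln (1 + y) \<ge> ln (W x2) + a / 2 * ln (1 + x2)"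
  proof (rule DERIV_nonpos_imp_nonincreasing[OF y(2)])
    fix t assume t: "y \<le> t" "t \<le> x2"
    then have t1: "-1 < t" "t < 1" using y x2 by auto
    have "U t - (2 - 2 * a) \<ge> 3 * a" using above[of "1 + t"] t t1 unfolding x2_def by simp
    then show "\<exists>d. ((\<lambda>t. ln (W t) + a / 2 * ln (1 + t)) has_real_derivative d) (at t) \<and> d \<le> 0"
      unfolding W_def by (rule sol_gap_log_nonincreasing[OF solU solV a t1 _ gap[OF t1]])
  qed
  moreover have "a / 2 * ln (1 + y) = a / 2 * ln (1 + x2) - K"
    unfolding y_def x2_def using s2 a by (simp add: ln_mult algebra_simps)
  ultimately have "ln (W y) \<ge> ln (2 * apriori_radius c) + 1" using K_def by linarith
  moreover have "ln (W y) < ln (2 * apriori_radius c)" using W[of y] y x2 by simp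
  ultimately show False by simp
qed

lemma gamma_plus_eq_if_maximal:
  assumes sol: "is_sol c U" and max: "\<And>V x. is_sol c V \<Longrightarrow> -1 < x \<Longrightarrow> x < 1 \<Longrightarrow> V x \<le> U x"
  shows "gamma_plus c = U 0"
  unfolding gamma_plus_def
proof (rule the_equality)
  show "\<exists>U'. is_sol c U' \<and> (\<forall>V. is_sol c V \<longrightarrow> (\<forall>x. -1 < x \<and> x < 1 \<longrightarrow> V x \<le> U' x)) \<and> U' 0 = U 0"
    using sol max by blast
  fix g assume "\<exists>U'. is_sol c U' \<and> (\<forall>V. is_sol c V \<longrightarrow> (\<forall>x. -1 < x \<and> x < 1 \<longrightarrow> V x \<le> U' x)) \<and> U' 0 = g"
  then obtain U' where U': "is_sol c U'" "\<forall>V. is_sol c V \<longrightarrow> (\<forall>x. -1 < x \<and> x < 1 \<longrightarrow> V x \<le> U' x)"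
    "U' 0 = g"
    by blast
  have "U 0 \<le> U' 0" using U'(2) sol by simp
  moreover have "U' 0 \<le> U 0" using max[OF U'(1)] by simp
  ultimately show "g = U 0" using U'(3) by simp
qed

text \<open>Either the solution enters the band above \<open>2 - 2a\<close> arbitrarily close to \<open>x = -1\<close> and then leaves
  it downwards, or it stays above \<open>2 + a\<close> near \<open>-1\<close> and is therefore the maximal solution.\<close>

lemma sol_approaches_lower_root:
  assumes sol: "is_sol c U" and a: "a > 0" "a\<^sup>2 = 1 + cc1 c"
    and not_max: "U 0 \<noteq> gamma_plus c" and \<eta>: "\<eta> > 0" and s': "s' > 0"
  shows "\<exists>s. 0 < s \<and> s \<le> s' \<and> U (-1 + s) - (2 - 2 * a) \<le> \<eta>"
proof -
  define \<eta>' where "\<eta>' = min \<eta> a"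
  have \<eta>': "0 < \<eta>'" "\<eta>' \<le> a" "\<eta>' \<le> \<eta>" unfolding \<eta>'_def using \<eta> a by auto
  define B where "B = \<bar>cc2 c\<bar> + \<bar>cc1 c\<bar> + 2 * \<bar>cc3 c\<bar> + 4 + 4 * a"
  have B: "\<bar>beta c a t\<bar> \<le> B" if "-1 < t" "t < 1" for t
    unfolding B_def using abs_beta_le[OF that] a by simp
  have "6 * a + B > 0" unfolding B_def using a by simp
  define s2 where "s2 = min s' (min (1/2) (\<eta>' * a / 4 / (6 * a + B)))"
  have s2: "0 < s2" "s2 \<le> s'"
    unfolding s2_def using s' \<eta>' a \<open>6 * a + B > 0\<close> by auto
  have "s2 \<le> 1/2" unfolding s2_def by (rule min.coboundedI2[OF min.cobounded1])
  have "s2 \<le> \<eta>' * a / 4 / (6 * a + B)" unfolding s2_def by auto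
  then have "s2 * (6 * a + B) \<le> \<eta>' * a / 4"
    using \<open>6 * a + B > 0\<close> by (simp add: pos_le_divide_eq algebra_simps)
  show ?thesis
  proof (cases "\<exists>s1. 0 < s1 \<and> s1 \<le> s2 \<and> U (-1 + s1) - (2 - 2 * a) < 3 * a")
    case True
    then obtain s1 where s1: "0 < s1" "s1 \<le> s2" "U (-1 + s1) - (2 - 2 * a) < 3 * a" by blast
    have "s1 * (6 * a + B) \<le> s2 * (6 * a + B)" using s1 \<open>6 * a + B > 0\<close> by (intro mult_right_mono) auto
    then have "s1 * (6 * a + B) \<le> \<eta>' * a / 4" using \<open>s2 * (6 * a + B) \<le> \<eta>' * a / 4\<close> by linarith
    moreover have "s1 \<le> 1/2" using s1 \<open>s2 \<le> 1/2\<close> by linarith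
    ultimately obtain s where "0 < s" "s \<le> s1" "U (-1 + s) - (2 - 2 * a) \<le> \<eta>'"
      using sol_leaves_band_near_left_end[OF sol a \<eta>'(1,2) B s1(1) _ _ s1(3)] by blast
    then show ?thesis using s1 s2 \<eta>' by (intro exI[of _ s]) auto
  next
    case False
    then have above: "U (-1 + s) - (2 - 2 * a) \<ge> 3 * a" if "0 < s" "s \<le> s2" for s
      using that by (meson not_less)
    have "s2 < 1" using \<open>s2 \<le> 1/2\<close> by linarith
    have "V x \<le> U x" if "is_sol c V" "-1 < x" "x < 1" for V x
      using sol_maximal_near_upper_root[OF sol a(1) s2(1) \<open>s2 < 1\<close> above that] .
    then have "gamma_plus c = U 0" by (rule gamma_plus_eq_if_maximal[OF sol])
    then show ?thesis using not_max by simp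
  qed
qed

section \<open>Uniform estimate at the left end\<close>

lemma sol_power_bound_near_left_end:
  assumes sol: "is_sol c U" and a: "a\<^sup>2 = 1 + cc1 c"
    and \<mu>: "0 \<le> \<mu>" "\<mu> \<le> 1" "\<epsilon> \<le> a - \<mu>"
    and s0: "0 < s0" "4 * s0 \<le> \<epsilon>" "s0 \<le> 1"
    and B: "\<And>t. -1 < t \<Longrightarrow> t < 1 \<Longrightarrow> \<bar>beta c a t\<bar> \<le> B" and small: "s0 powr \<mu> * B < \<epsilon>\<^sup>2"
    and R: "apriori_radius c \<le> R"
    and start: "U (-1 + s0) - (2 - 2 * a) \<le> \<epsilon>"
    and x: "-1 < x" "x \<le> -1 + s0"
  shows "\<bar>U x - (2 - 2 * a)\<bar> \<le> (\<epsilon> + R + 2 + (B + 1) / \<epsilon>) / s0 powr \<mu> * (1 + x) powr \<mu>"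
proof -
  have "\<epsilon> > 0" "B \<ge> 0" using s0 B[of 0] by auto
  have sp: "0 < s0 powr \<mu>" "s0 powr \<mu> \<le> 1" using s0 \<mu> by (auto intro: powr_le1)
  have "a \<ge> 0" using \<mu> \<open>\<epsilon> > 0\<close> by linarith
  define N where "N = \<epsilon> + R + 2 + (B + 1) / \<epsilon>"
  have "(B + 1) / \<epsilon> > 0" using \<open>\<epsilon> > 0\<close> \<open>B \<ge> 0\<close> by simp
  then have "N > 0" unfolding N_def using \<open>\<epsilon> > 0\<close> R apriori_radius_ge_9[of c] by linarith
  have "U x - (2 - 2 * a) \<le> \<epsilon> / s0 powr \<mu> * (1 + x) powr \<mu>"
  proof -
    have "B < \<epsilon> / s0 powr \<mu> * \<epsilon>"
      using small sp by (simp add: power2_eq_square pos_less_divide_eq mult.commute)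
    then show ?thesis
      using sol_trapped_by_power[OF sol a _ \<mu> s0 B, of 1 "\<epsilon> / s0 powr \<mu>"] start x sp by simp
  qed
  moreover have "\<epsilon> / s0 powr \<mu> \<le> N / s0 powr \<mu>"
    unfolding N_def using sp R apriori_radius_ge_9[of c] \<open>\<epsilon> > 0\<close> \<open>B \<ge> 0\<close>
    by (intro divide_right_mono) auto
  moreover have "- (U x - (2 - 2 * a)) \<le> N / s0 powr \<mu> * (1 + x) powr \<mu>"
  proof -
    have "B + 1 \<le> N * \<epsilon>"
      unfolding N_def using \<open>\<epsilon> > 0\<close> R apriori_radius_ge_9[of c] by (simp add: field_simps)
    also have "\<dots> \<le> N / s0 powr \<mu> * \<epsilon>"
      using sp \<open>\<epsilon> > 0\<close> \<open>N > 0\<close>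
      by (intro mult_right_mono) (auto simp: le_divide_eq mult_left_le)
    finally have "B < N / s0 powr \<mu> * \<epsilon>" by simp
    moreover have "- (U (-1 + s0) - (2 - 2 * a)) \<le> N"
      using sol_abs_less_apriori_radius[OF sol, of "-1 + s0"] s0 R \<open>a \<ge> 0\<close> \<open>\<epsilon> > 0\<close>
        \<open>(B + 1) / \<epsilon> > 0\<close>
      unfolding N_def by (simp add: abs_less_iff)
    ultimately show ?thesis
      using sol_trapped_by_power[OF sol a _ \<mu> s0 B, of "-1" "N / s0 powr \<mu>"] x sp by simp
  qed
  moreover have "\<epsilon> / s0 powr \<mu> * (1 + x) powr \<mu> \<le> N / s0 powr \<mu> * (1 + x) powr \<mu>"
    using calculation(2) by (rule mult_right_mono) simp
  ultimately show ?thesis unfolding N_def[symmetric] abs_le_iff by linarith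
qed

lemma Lim_at_right_eq_of_power_bound:
  fixes U :: "real \<Rightarrow> real"
  assumes "0 < \<mu>" "0 < \<delta>" and bound: "\<And>x. p < x \<Longrightarrow> x < p + \<delta> \<Longrightarrow> \<bar>U x - L\<bar> \<le> A * (x - p) powr \<mu>"
  shows "Lim (at_right p) U = L"
proof (rule tendsto_Lim[OF trivial_limit_at_right_real])
  have "((\<lambda>x. x - p) \<longlongrightarrow> p - p) (at_right p)"
    by (intro tendsto_diff tendsto_ident_at tendsto_const)
  then have "((\<lambda>x. x - p) \<longlongrightarrow> 0) (at_right p)" by simp
  moreover have "\<forall>\<^sub>F x in at_right p. 0 \<le> x - p"
    by (rule eventually_mono[OF eventually_at_right_less]) simp
  ultimately have "((\<lambda>x. (x - p) powr \<mu>) \<longlongrightarrow> 0) (at_right p)"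
    by (rule tendsto_zero_powrI[OF _ tendsto_const _ assms(1)])
  then have "((\<lambda>x. A * (x - p) powr \<mu>) \<longlongrightarrow> 0) (at_right p)"
    using tendsto_mult[OF tendsto_const, of _ 0 _ A] by simp
  moreover have "\<forall>\<^sub>F x in at_right p. norm (U x - L) \<le> A * (x - p) powr \<mu>"
    by (rule eventually_mono[OF eventually_at_right_real[of p "p + \<delta>"]]) (use assms(2) bound in auto)
  ultimately have "((\<lambda>x. U x - L) \<longlongrightarrow> 0) (at_right p)"
    by (rule Lim_null_comparison[rotated])
  then show "(U \<longlongrightarrow> L) (at_right p)" by (simp add: LIM_zero_iff)
qed

lemma sol_left_end_bound:
  assumes sol: "is_sol c U" and c1: "cc1 c > -1"
    and \<epsilon>1: "0 < \<epsilon>1" "\<epsilon>1 \<le> \<epsilon>"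
    and \<mu>0: "0 < \<mu>0" "\<mu>0 \<le> min (sqrt (1 + cc1 c)) 1 - \<epsilon>1"
    and s0: "0 < s0" "4 * s0 \<le> \<epsilon>1" "s0 \<le> 1"
    and B: "\<bar>cc2 c\<bar> + \<bar>cc1 c\<bar> + 2 * \<bar>cc3 c\<bar> + 4 + 4 * sqrt (1 + cc1 c) \<le> B"
    and small: "s0 powr \<mu>0 * B < \<epsilon>1\<^sup>2"
    and R: "apriori_radius c \<le> R"
    and start: "U (-1 + s0) - (2 - 2 * sqrt (1 + cc1 c)) \<le> \<epsilon>1"
    and x: "-1 < x" "x < -1 + s0"
  shows "\<bar>U x - Lim (at_right (-1)) U\<bar>
    \<le> (\<epsilon>1 + R + 2 + (B + 1) / \<epsilon>1) / s0 * (1 + x) powr (min (sqrt (1 + cc1 c)) 1 - \<epsilon>)"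
proof -
  define a where "a = sqrt (1 + cc1 c)"
  define \<mu> where "\<mu> = min a 1 - \<epsilon>1"
  define N where "N = \<epsilon>1 + R + 2 + (B + 1) / \<epsilon>1"
  have a: "a \<ge> 0" "a\<^sup>2 = 1 + cc1 c" unfolding a_def using c1 by simp_all
  have \<mu>: "0 < \<mu>" "\<mu> \<le> 1" "\<epsilon>1 \<le> a - \<mu>" "\<mu>0 \<le> \<mu>"
    using \<mu>0 \<epsilon>1 unfolding \<mu>_def a_def by auto
  have Bbeta: "\<bar>beta c a t\<bar> \<le> B" if "-1 < t" "t < 1" for t
    using abs_beta_le[OF that a(1), of c] B unfolding a_def by simp
  have "B \<ge> 0" using Bbeta[of 0] by linarith
  have "N > 0" unfolding N_def using \<epsilon>1 \<open>B \<ge> 0\<close> R apriori_radius_ge_9[of c]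
    by (simp add: add_pos_nonneg)
  have "s0 powr \<mu> \<le> s0 powr \<mu>0" using s0 \<mu> by (intro powr_mono') auto
  then have "s0 powr \<mu> * B \<le> s0 powr \<mu>0 * B" using \<open>B \<ge> 0\<close> by (rule mult_right_mono)
  then have "s0 powr \<mu> * B < \<epsilon>1\<^sup>2" using small by linarith
  then have bound: "\<bar>U y - (2 - 2 * a)\<bar> \<le> N / s0 powr \<mu> * (1 + y) powr \<mu>"
    if "-1 < y" "y \<le> -1 + s0" for y
    unfolding N_def using sol_power_bound_near_left_end[OF sol a(2) _ \<mu>(2,3) s0 Bbeta _ R _ that] \<mu> start
    unfolding a_def by simp
  have "Lim (at_right (-1)) U = 2 - 2 * a"
  proof (rule Lim_at_right_eq_of_power_bound[OF \<mu>(1) s0(1)])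
    fix y :: real assume "-1 < y" "y < -1 + s0"
    then show "\<bar>U y - (2 - 2 * a)\<bar> \<le> N / s0 powr \<mu> * (y - -1) powr \<mu>"
      using bound[of y] by (simp add: add.commute)
  qed
  then have "\<bar>U x - Lim (at_right (-1)) U\<bar> \<le> N / s0 powr \<mu> * (1 + x) powr \<mu>"
    using bound x by simp
  also have "\<dots> \<le> N / s0 * (1 + x) powr (min a 1 - \<epsilon>)"
  proof (rule mult_mono)
    have "s0 \<le> s0 powr \<mu>" using powr_mono'[of \<mu> 1 s0] s0 \<mu> by simp
    then show "N / s0 powr \<mu> \<le> N / s0" using s0 \<open>N > 0\<close> by (intro divide_left_mono) auto
    show "(1 + x) powr \<mu> \<le> (1 + x) powr (min a 1 - \<epsilon>)"
      using x s0 \<epsilon>1 unfolding \<mu>_def by (intro powr_mono') auto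
  qed (use x s0 \<open>N > 0\<close> in auto)
  finally show ?thesis unfolding N_def a_def .
qed

lemma beta_const_le_norm:
  assumes "cc1 c \<ge> -1"
  shows "\<bar>cc2 c\<bar> + \<bar>cc1 c\<bar> + 2 * \<bar>cc3 c\<bar> + 4 + 4 * sqrt (1 + cc1 c) \<le> 8 * norm c + 8"
proof -
  have "(1 + norm c)\<^sup>2 = 1 + 2 * norm c + norm c * norm c" by (simp add: power2_eq_square algebra_simps)
  moreover have "0 \<le> norm c * norm c" by simp
  moreover have "cc1 c \<le> norm c" using abs_cc_le_norm(1)[of c] by linarith
  ultimately have "1 + cc1 c \<le> (1 + norm c)\<^sup>2" using norm_ge_zero[of c] by linarith
  then have "sqrt (1 + cc1 c) \<le> 1 + norm c"
    using real_sqrt_le_mono real_sqrt_abs[of "1 + norm c"] by fastforce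
  then show ?thesis using abs_cc_le_norm[of c] by linarith
qed

lemma eventually_powr_mult_small:
  fixes \<mu> e B :: real
  assumes "0 < \<mu>" "0 < e"
  shows "\<forall>\<^sub>F s in at_right 0. s powr \<mu> * B < e"
proof -
  have "\<forall>\<^sub>F s in at_right (0::real). 0 \<le> s" by (rule eventually_mono[OF eventually_at_right_less]) simp
  then have "((\<lambda>s. s powr \<mu>) \<longlongrightarrow> 0) (at_right (0::real))"
    by (rule tendsto_zero_powrI[OF tendsto_ident_at tendsto_const _ assms(1)])
  then have "((\<lambda>s. s powr \<mu> * B) \<longlongrightarrow> 0 * B) (at_right (0::real))" by (rule tendsto_mult[OF _ tendsto_const])
  then show ?thesis using assms(2) by (auto dest: order_tendstoD(2))
qed

lemma exponent_margin_near:
  assumes c1: "cc1 c0 > -1" and \<eta>: "\<eta> > 0"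
  shows "\<exists>r>0. \<forall>c. dist c c0 < r \<longrightarrow> cc1 c > -1 \<and> min (sqrt (1 + cc1 c)) 1 > min (sqrt (1 + cc1 c0)) 1 - \<eta>"
proof -
  have "continuous (at c0) (\<lambda>c. min (sqrt (1 + cc1 c)) 1)" unfolding cc1_def by (intro continuous_intros)
  then obtain r where r: "r > 0" "\<And>c. dist c c0 < r \<Longrightarrow> dist (min (sqrt (1 + cc1 c)) 1) (min (sqrt (1 + cc1 c0)) 1) < \<eta>"
    unfolding continuous_at_eps_delta using \<eta> by blast
  show ?thesis
  proof (intro exI[of _ "min r (1 + cc1 c0)"] conjI allI impI)
    fix c assume "dist c c0 < min r (1 + cc1 c0)"
    moreover have "\<bar>cc1 c - cc1 c0\<bar> \<le> dist c c0"
      using abs_cc_le_norm(1)[of "c - c0"] by (simp add: dist_norm cc1_def)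
    ultimately show "cc1 c > -1" "min (sqrt (1 + cc1 c)) 1 > min (sqrt (1 + cc1 c0)) 1 - \<eta>"
      using r(2)[of c] by (auto simp: dist_real_def)
  qed (use r c1 in auto)
qed

lemma start_condition_near:
  assumes sol0: "is_sol c0 U0" and s0: "0 < s0" "s0 \<le> 1"
    and start0: "U0 (-1 + s0) - (2 - 2 * sqrt (1 + cc1 c0)) < \<epsilon>"
  shows "\<exists>r>0. \<forall>c g U. dist (c, g) (c0, U0 0) < r \<longrightarrow> is_sol c U \<longrightarrow> U 0 = g \<longrightarrow>
    U (-1 + s0) - (2 - 2 * sqrt (1 + cc1 c)) < \<epsilon>"
proof -
  define m where "m = \<epsilon> - (U0 (-1 + s0) - (2 - 2 * sqrt (1 + cc1 c0)))"
  have "m > 0" using start0 unfolding m_def by simp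
  have "continuous (at c0) (\<lambda>c. sqrt (1 + cc1 c))" unfolding cc1_def by (intro continuous_intros)
  then obtain r1 where r1: "r1 > 0" "\<And>c. dist c c0 < r1 \<Longrightarrow> \<bar>sqrt (1 + cc1 c) - sqrt (1 + cc1 c0)\<bar> < m / 4"
    unfolding continuous_at_eps_delta dist_real_def using \<open>m > 0\<close> by (metis zero_less_divide_iff zero_less_numeral)
  define R where "R = 14 + 5 * norm c0"
  define K where "K = (1 + 5 / s0) * exp ((2 + R) / s0 + 1)"
  have "K > 0" unfolding K_def using s0 by (simp add: add_pos_nonneg)
  show ?thesis
  proof (intro exI[of _ "min 1 (min r1 (m / (4 * K)))"] conjI allI impI)
    fix c g U assume close: "dist (c, g) (c0, U0 0) < min 1 (min r1 (m / (4 * K)))"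
      and sol: "is_sol c U" and "U 0 = g"
    have dc: "dist c c0 < min 1 (min r1 (m / (4 * K)))" "dist g (U0 0) < m / (4 * K)"
      using close dist_fst_le[of "(c, g)" "(c0, U0 0)"] dist_snd_le[of "(c, g)" "(c0, U0 0)"] by auto
    have "norm c \<le> norm c0 + 1" using dc(1) norm_triangle_ineq2[of c c0] by (simp add: dist_norm)
    then have R: "apriori_radius c \<le> R" "apriori_radius c0 \<le> R"
      using apriori_radius_le_norm[of c] apriori_radius_le_norm[of c0] unfolding R_def by linarith+
    have "\<bar>U (-1 + s0) - U0 (-1 + s0)\<bar> \<le> K * (\<bar>U 0 - U0 0\<bar> + norm (c - c0))"
      unfolding K_def by (rule sol_diff_bound[OF sol sol0 s0 _ _ R]) (use s0 in auto)
    also have "\<dots> \<le> K * (m / (4 * K) + m / (4 * K))"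
      using dc \<open>U 0 = g\<close> \<open>K > 0\<close> by (intro mult_left_mono) (auto simp: dist_norm dist_real_def)
    also have "\<dots> = m / 2" using \<open>K > 0\<close> by simp
    finally have "\<bar>U (-1 + s0) - U0 (-1 + s0)\<bar> \<le> m / 2" .
    moreover have "\<bar>sqrt (1 + cc1 c) - sqrt (1 + cc1 c0)\<bar> < m / 4" using r1(2)[of c] dc(1) by simp
    ultimately show "U (-1 + s0) - (2 - 2 * sqrt (1 + cc1 c)) < \<epsilon>"
      using m_def unfolding abs_le_iff abs_less_iff by linarith
  qed (use \<open>m > 0\<close> \<open>K > 0\<close> r1 in auto)
qed

definition left_end_estimate :: "real \<Rightarrow> real \<Rightarrow> real \<Rightarrow> param \<Rightarrow> real \<Rightarrow> bool" where
  "left_end_estimate \<epsilon> \<delta> C c g \<longleftrightarrow> (\<forall>U. is_sol c U \<longrightarrow> U 0 = g \<longrightarrow>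
     (\<forall>x. -1 < x \<and> x < -1 + \<delta> \<longrightarrow>
        \<bar>U x - Lim (at_right (-1)) U\<bar> \<le> C * (1 + x) powr (min (sqrt (1 + cc1 c)) 1 - \<epsilon>)))"

lemma left_end_estimate_mono:
  assumes "left_end_estimate \<epsilon> \<delta> C c g" "\<delta>' \<le> \<delta>" "C \<le> C'"
  shows "left_end_estimate \<epsilon> \<delta>' C' c g"
  unfolding left_end_estimate_def
proof (intro allI impI)
  fix U x assume "is_sol c U" "U 0 = g" "-1 < x \<and> x < -1 + \<delta>'"
  then have "\<bar>U x - Lim (at_right (-1)) U\<bar> \<le> C * (1 + x) powr (min (sqrt (1 + cc1 c)) 1 - \<epsilon>)"
    using assms(1,2) unfolding left_end_estimate_def by auto
  also have "\<dots> \<le> C' * (1 + x) powr (min (sqrt (1 + cc1 c)) 1 - \<epsilon>)"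
    using assms(3) by (rule mult_right_mono) simp
  finally show "\<bar>U x - Lim (at_right (-1)) U\<bar> \<le> C' * (1 + x) powr (min (sqrt (1 + cc1 c)) 1 - \<epsilon>)" .
qed

lemma exists_start_scale:
  assumes sol0: "is_sol c0 U0" and c1: "cc1 c0 > -1" and not_max: "U0 0 \<noteq> gamma_plus c0"
    and "0 < \<mu>0" "0 < \<epsilon>1"
  shows "\<exists>s0>0. 4 * s0 \<le> \<epsilon>1 \<and> s0 \<le> 1 \<and> s0 powr \<mu>0 * B < \<epsilon>1\<^sup>2
    \<and> U0 (-1 + s0) - (2 - 2 * sqrt (1 + cc1 c0)) < \<epsilon>1"
proof -
  have "\<forall>\<^sub>F s in at_right 0. s powr \<mu>0 * B < \<epsilon>1\<^sup>2"
    using assms(4,5) by (intro eventually_powr_mult_small) auto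
  then obtain b where b: "b > 0" "\<And>s. 0 < s \<Longrightarrow> s < b \<Longrightarrow> s powr \<mu>0 * B < \<epsilon>1\<^sup>2"
    unfolding eventually_at_right_field by blast
  define smax where "smax = min (b / 2) (min (\<epsilon>1 / 4) 1)"
  have "smax > 0" unfolding smax_def using b assms(5) by simp
  moreover have "sqrt (1 + cc1 c0) > 0" "(sqrt (1 + cc1 c0))\<^sup>2 = 1 + cc1 c0" using c1 by simp_all
  ultimately obtain s0 where "0 < s0" "s0 \<le> smax" "U0 (-1 + s0) - (2 - 2 * sqrt (1 + cc1 c0)) \<le> \<epsilon>1 / 2"
    using sol_approaches_lower_root[OF sol0 _ _ not_max, of "sqrt (1 + cc1 c0)" "\<epsilon>1 / 2" smax] assms(5)
    by auto
  then show ?thesis using b assms(5) unfolding smax_def by (intro exI[of _ s0]) auto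
qed

text \<open>Membership in \<open>Iset\<close> does not provide a solution through \<open>(c\<^sub>0, g\<^sub>0)\<close>: if no solution passes
  near it the estimate is vacuous, otherwise one is obtained as a limit.\<close>

lemma left_end_estimate_near_point:
  assumes c1: "cc1 c0 > -1" and not_max: "g0 \<noteq> gamma_plus c0" and \<epsilon>: "\<epsilon> > 0"
  shows "\<exists>r>0. \<exists>\<delta>>0. \<exists>C>0. \<forall>c g. dist (c, g) (c0, g0) < r \<longrightarrow> left_end_estimate \<epsilon> \<delta> C c g"
proof (cases "\<exists>r>0. \<forall>c g U. dist (c, g) (c0, g0) < r \<longrightarrow> is_sol c U \<longrightarrow> U 0 \<noteq> g")
  case True
  then obtain r where "r > 0" "\<forall>c g U. dist (c, g) (c0, g0) < r \<longrightarrow> is_sol c U \<longrightarrow> U 0 \<noteq> g" by blast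
  then show ?thesis unfolding left_end_estimate_def by (intro exI[of _ r] exI[of _ 1] conjI) auto
next
  case False
  have "\<exists>U0. is_sol c0 U0 \<and> U0 0 = g0" by (rule sol_exists_at_limit_point) (use False in blast)
  then obtain U0 where sol0: "is_sol c0 U0" "U0 0 = g0" by blast
  define m0 where "m0 = min (sqrt (1 + cc1 c0)) 1"
  define \<epsilon>1 where "\<epsilon>1 = min \<epsilon> (m0 / 4)"
  define \<mu>0 where "\<mu>0 = m0 / 2"
  define M where "M = norm c0 + 1"
  define B where "B = 8 * M + 8"
  define R where "R = 9 + 5 * M"
  have "m0 > 0" unfolding m0_def using c1 by simp
  then have \<epsilon>1: "0 < \<epsilon>1" "\<epsilon>1 \<le> \<epsilon>" "\<epsilon>1 \<le> m0 / 4" unfolding \<epsilon>1_def using \<epsilon> by auto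
  obtain s0 where s0: "0 < s0" "4 * s0 \<le> \<epsilon>1" "s0 \<le> 1" "s0 powr \<mu>0 * B < \<epsilon>1\<^sup>2"
      "U0 (-1 + s0) - (2 - 2 * sqrt (1 + cc1 c0)) < \<epsilon>1"
    using exists_start_scale[OF sol0(1) c1, of \<mu>0 \<epsilon>1 B] sol0(2) not_max \<epsilon>1(1) \<open>m0 > 0\<close>
    unfolding \<mu>0_def by auto
  obtain r1 where r1: "r1 > 0" "\<And>c g U. dist (c, g) (c0, g0) < r1 \<Longrightarrow> is_sol c U \<Longrightarrow> U 0 = g \<Longrightarrow>
      U (-1 + s0) - (2 - 2 * sqrt (1 + cc1 c)) < \<epsilon>1"
    using start_condition_near[OF sol0(1) s0(1,3) s0(5)] sol0(2) by auto
  obtain r2 where r2: "r2 > 0"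
    "\<And>c. dist c c0 < r2 \<Longrightarrow> cc1 c > -1 \<and> min (sqrt (1 + cc1 c)) 1 > m0 - m0 / 4"
    using exponent_margin_near[OF c1, of "m0 / 4"] \<open>m0 > 0\<close> unfolding m0_def by auto
  define C where "C = (\<epsilon>1 + R + 2 + (B + 1) / \<epsilon>1) / s0"
  have "C > 0" unfolding C_def R_def B_def M_def using \<epsilon>1 s0 by (simp add: add_pos_nonneg)
  have "left_end_estimate \<epsilon> s0 C c g" if close: "dist (c, g) (c0, g0) < min 1 (min r1 r2)" for c g
    unfolding left_end_estimate_def
  proof (intro allI impI)
    fix U x assume sol: "is_sol c U" and "U 0 = g" and x: "-1 < x \<and> x < -1 + s0"
    have dc: "dist c c0 < min 1 (min r1 r2)" using close dist_fst_le[of "(c, g)" "(c0, g0)"] by simp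
    then have "norm c \<le> M" using norm_triangle_ineq2[of c c0] unfolding M_def by (simp add: dist_norm)
    from dc have "dist c c0 < r2" by simp
    then have c: "cc1 c > -1" "min (sqrt (1 + cc1 c)) 1 > m0 - m0 / 4" using r2(2) by blast+
    show "\<bar>U x - Lim (at_right (-1)) U\<bar> \<le> C * (1 + x) powr (min (sqrt (1 + cc1 c)) 1 - \<epsilon>)"
      unfolding C_def
    proof (rule sol_left_end_bound[OF sol c(1) \<epsilon>1(1,2) _ _ s0(1-3) _ s0(4)])
      show "0 < \<mu>0" "\<mu>0 \<le> min (sqrt (1 + cc1 c)) 1 - \<epsilon>1"
        using \<open>m0 > 0\<close> c(2) \<epsilon>1(3) unfolding \<mu>0_def by auto
      show "\<bar>cc2 c\<bar> + \<bar>cc1 c\<bar> + 2 * \<bar>cc3 c\<bar> + 4 + 4 * sqrt (1 + cc1 c) \<le> B"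
        using beta_const_le_norm[of c] c(1) \<open>norm c \<le> M\<close> unfolding B_def by linarith
      show "apriori_radius c \<le> R"
        using apriori_radius_le_norm[of c] \<open>norm c \<le> M\<close> unfolding R_def by linarith
      show "U (-1 + s0) - (2 - 2 * sqrt (1 + cc1 c)) \<le> \<epsilon>1"
        using r1(2)[OF _ sol \<open>U 0 = g\<close>] close by simp
      show "-1 < x" "x < -1 + s0" using x by auto
    qed
  qed
  moreover have "min 1 (min r1 r2) > 0" using r1(1) r2(1) by simp
  ultimately show ?thesis using s0(1) \<open>C > 0\<close> by blast
qed

lemma compact_uniform_from_local:
  fixes K :: "'a::metric_space set" and P :: "real \<Rightarrow> real \<Rightarrow> 'a \<Rightarrow> bool"
  assumes "compact K"
    and local: "\<And>p. p \<in> K \<Longrightarrow> \<exists>r>0. \<exists>\<delta>>0. \<exists>C>0. \<forall>q\<in>K. dist q p < r \<longrightarrow> P \<delta> C q"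
    and mono: "\<And>\<delta> \<delta>' C C' q. P \<delta> C q \<Longrightarrow> \<delta>' \<le> \<delta> \<Longrightarrow> C \<le> C' \<Longrightarrow> P \<delta>' C' q"
  shows "\<exists>\<delta>>0. \<exists>C>0. \<forall>q\<in>K. P \<delta> C q"
proof -
  have "\<forall>p\<in>K. \<exists>t. fst t > 0 \<and> fst (snd t) > 0 \<and> snd (snd t) > 0
      \<and> (\<forall>q\<in>K. dist q p < fst t \<longrightarrow> P (fst (snd t)) (snd (snd t)) q)"
    using local by fastforce
  then obtain T where T: "\<And>p. p \<in> K \<Longrightarrow> fst (T p) > 0 \<and> fst (snd (T p)) > 0 \<and> snd (snd (T p)) > 0
      \<and> (\<forall>q\<in>K. dist q p < fst (T p) \<longrightarrow> P (fst (snd (T p))) (snd (snd (T p))) q)"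
    by (metis bchoice)
  obtain F where F: "F \<subseteq> K" "finite F" "K \<subseteq> (\<Union>p\<in>F. ball p (fst (T p)))"
    by (rule compactE_image[OF \<open>compact K\<close>, of K "\<lambda>p. ball p (fst (T p))"])
       (use T in \<open>auto intro: centre_in_ball[THEN iffD2]\<close>)
  show ?thesis
  proof (cases "F = {}")
    case True
    then show ?thesis using F by (intro exI[of _ 1] conjI) auto
  next
    case False
    define \<delta> where "\<delta> = Min ((\<lambda>p. fst (snd (T p))) ` F)"
    define C where "C = Max ((\<lambda>p. snd (snd (T p))) ` F)"
    have "\<delta> \<in> (\<lambda>p. fst (snd (T p))) ` F" "C \<in> (\<lambda>p. snd (snd (T p))) ` F"
      unfolding \<delta>_def C_def using F False by (auto intro!: Min_in Max_in)
    then have "\<delta> > 0" "C > 0" using T F(1) by auto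
    moreover have "P \<delta> C q" if q: "q \<in> K" for q
    proof -
      obtain p where "p \<in> F" "q \<in> ball p (fst (T p))" using F(3) q by blast
      then have p: "p \<in> F" "dist q p < fst (T p)" by (simp_all add: dist_commute)
      then have "P (fst (snd (T p))) (snd (snd (T p))) q" using T F(1) q by blast
      moreover have "\<delta> \<le> fst (snd (T p))" "snd (snd (T p)) \<le> C"
        unfolding \<delta>_def C_def using F(2) p(1) by auto
      ultimately show ?thesis using mono by blast
    qed
    ultimately show ?thesis by blast
  qed
qed

theorem lemma2p12:
  fixes K :: "(param \<times> real) set" and \<epsilon> :: real
  assumes "compact K"
    and "K \<subseteq> Iset - {(c, g). cc1 c = -1 \<or> g = gamma_plus c}"
    and "\<epsilon> > 0"
  shows "\<exists>\<delta> > 0. \<exists>C > 0. \<forall>c g U. (c, g) \<in> K \<longrightarrow> is_sol c U \<longrightarrow> U 0 = g \<longrightarrow>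
           (\<forall>x. -1 < x \<and> x < -1 + \<delta> \<longrightarrow>
              \<bar>U x - Lim (at_right (-1)) U\<bar>
                \<le> C * (1 + x) powr (min (sqrt (1 + cc1 c)) 1 - \<epsilon>))"
proof -
  have "\<exists>\<delta>>0. \<exists>C>0. \<forall>q\<in>K. left_end_estimate \<epsilon> \<delta> C (fst q) (snd q)"
  proof (rule compact_uniform_from_local[OF assms(1)])
    fix p assume "p \<in> K"
    then have "cc1 (fst p) > -1" "snd p \<noteq> gamma_plus (fst p)"
      using assms(2) unfolding Iset_def Jset_def by force+
    from left_end_estimate_near_point[OF this assms(3)]
    show "\<exists>r>0. \<exists>\<delta>>0. \<exists>C>0. \<forall>q\<in>K. dist q p < r \<longrightarrow> left_end_estimate \<epsilon> \<delta> C (fst q) (snd q)"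
      by (metis prod.collapse)
  qed (rule left_end_estimate_mono)
  then show ?thesis unfolding left_end_estimate_def by fastforce
qed

end
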